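(* For every integer $r\ge 1$, \[\frac{b}{4}\,\rho(r)\;\le\; \mathrm{Var}\big(\mu^{(r)}\big)\;\le\; 2b^2\,\rho(r).\]
   Context: Fix an integer $b\ge 2$. Every $n\in\mathbb{N}=\{0,1,2,\dots\}$ has a unique base-$b$ expansion $n=\sum_{k\ge0}n_kb^k$ with digits $n_k\in\{0,\dots,b-1\}$, finitely many nonzero; $s(n):=\sum_k n_k$ is the sum-of-digits function. For $r,n\in\mathbb{N}$ put $\Delta^{(r)}(n):=s(n+r)-s(n)$. For $d\in\mathbb{Z}$, $\mu^{(r)}(d):=\lim_{N\to\infty}\frac1N\big|\{n<N:\Delta^{(r)}(n)=d\}\big|$; these limits exist and $\mu^{(r)}$ is a probability measure on $\mathbb{Z}$ with finite moments of all orders. $\mathrm{Var}(\mu^{(r)})$ denotes its variance. Blocks: write the base-$b$ expansion of $r\ge1$ as the digit string $r_\ell\cdots r_0$ with $r_\ell\neq0$. A block of this string is either a maximal run of consecutive digits equal to $0$ (a block of $0$'s), or a maximal run of consecutive digits equal to $b-1$ (a block of $(b-1)$'s), or, when $b\ge3$, a single digit with value in $\{1,\dots,b-2\}$ (a single-digit block). The digit string is partitioned into its blocks; $\rho(r)$ denotes the number of blocks of $r$. *)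

theory Defs
  imports "HOL-Analysis.Analysis"
begin

definition digit :: "nat \<Rightarrow> nat \<Rightarrow> nat \<Rightarrow> nat" where
  "digit b n k = n div b ^ k mod b"

function sdig :: "nat \<Rightarrow> nat \<Rightarrow> nat" where
  "sdig b n = (if b < 2 \<or> n = 0 then 0 else n mod b + sdig b (n div b))"
  by auto
termination
  by (relation "Wellfounded.measure snd") (auto intro: div_less_dividend)

definition Delta :: "nat \<Rightarrow> nat \<Rightarrow> nat \<Rightarrow> int" where
  "Delta b r n = int (sdig b (n + r)) - int (sdig b n)"

definition mu :: "nat \<Rightarrow> nat \<Rightarrow> int \<Rightarrow> real" where
  "mu b r d = lim (\<lambda>N. real (card {n. n < N \<and> Delta b r n = d}) / real N)"

definition mean_mu :: "nat \<Rightarrow> nat \<Rightarrow> real" where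
  "mean_mu b r = (\<Sum>\<^sub>\<infinity>d\<in>(UNIV::int set). real_of_int d * mu b r d)"

definition var_mu :: "nat \<Rightarrow> nat \<Rightarrow> real" where
  "var_mu b r = (\<Sum>\<^sub>\<infinity>d\<in>(UNIV::int set). (real_of_int d - mean_mu b r)^2 * mu b r d)"

text \<open>Number of base-b digits of r (so digits r_0 .. r_l with l = ndigits - 1, r \<ge> 1).\<close>
definition ndigits :: "nat \<Rightarrow> nat \<Rightarrow> nat" where
  "ndigits b r = (LEAST k. r < b ^ k)"

text \<open>Number of blocks: count the positions k at which a new block starts
  (reading from position 0 upward): k = 0, or digit k is a single-digit block
  value in {1..b-2}, or digit k differs from digit k-1.  Runs of 0's and of
  (b-1)'s are merged into one block.\<close>
definition rho :: "nat \<Rightarrow> nat \<Rightarrow> nat" where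
  "rho b r = card {k. k < ndigits b r \<and>
      (k = 0 \<or> (digit b r k \<noteq> 0 \<and> digit b r k \<noteq> b - 1) \<or> digit b r k \<noteq> digit b r (k - 1))}"

end

theory Submission
  imports Defs
begin

text \<open>If adding \<open>r\<close> to \<open>n\<close> produces \<open>C(n)\<close> carries, then \<open>Delta b r n = s(r) - (b - 1) C(n)\<close>.
  Since \<open>Delta\<close> is \<open>b ^ K\<close>-periodic up to a fraction \<open>r / b ^ K\<close> of each period and \<open>C\<close> has a
  geometric tail, the moments of \<open>mu\<close> are limits of moments over \<open>{0..<b ^ K}\<close>, and
  \<open>Var mu = lim (b - 1)^2 V_K\<close>, where \<open>V_K\<close> is the variance of \<open>C\<close> on \<open>{0..<b ^ K}\<close>.
  Going from \<open>K\<close> to \<open>K + 1\<close> adds one Bernoulli carry of mean \<open>x_(K+1) = (r mod b ^ (K+1)) / b ^ (K+1)\<close>,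
  which gives \<open>(b - 1) V_K + 2 g_K = (b + 1) (y_1 + ... + y_K)\<close> with \<open>y_j = x_j (1 - x_j)\<close> and a
  covariance term \<open>g_K \<ge> 0\<close> that decays geometrically once \<open>K\<close> exceeds the length of \<open>r\<close>.
  It remains to compare \<open>y_1 + ... + y_K\<close> with the number of blocks: every block start forces a
  definite amount of \<open>y\<close>, while inside a block of \<open>0\<close>'s or \<open>(b-1)\<close>'s the \<open>x_j\<close> move
  geometrically towards \<open>0\<close> or \<open>1\<close>, so the potential \<open>min (x_j, 1 - x_j)\<close> pays for the \<open>y_j\<close> there.\<close>

section \<open>Digit sums and carries\<close>

declare sdig.simps[simp del]

lemma sdig_0 [simp]: "sdig b 0 = 0"
  by (simp add: sdig.simps)

lemma sum_lessThan_mult_blocks: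
  fixes g :: "nat \<Rightarrow> 'a::comm_monoid_add"
  shows "(\<Sum>i<n * k. g i) = (\<Sum>q<n. \<Sum>m<k. g (q * k + m))"
proof (induction n)
  case (Suc n)
  have "(\<Sum>i<Suc n * k. g i) = (\<Sum>i<n * k. g i) + (\<Sum>i\<in>{n * k..<n * k + k}. g i)"
    using sum.atLeastLessThan_concat[of 0 "n * k" "n * k + k" g]
    by (simp add: atLeast0LessThan add.commute)
  also have "(\<Sum>i\<in>{n * k..<n * k + k}. g i) = (\<Sum>m<k. g (n * k + m))"
    using sum.shift_bounds_nat_ivl[of g 0 "n * k" k] by (simp add: atLeast0LessThan add.commute)
  finally show ?case using Suc by simp
qed simp

lemma card_lessThan_filter_eq_sum:
  "real (card {n. n < (N::nat) \<and> P n}) = (\<Sum>n<N. if P n then 1 else 0)"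
proof -
  have "{n. n < N \<and> P n} = {..<N} \<inter> {n. P n}" by auto
  then show ?thesis by (simp add: sum.If_cases)
qed

locale digit_base =
  fixes b :: nat
  assumes base_ge_2: "2 \<le> b"
begin

lemma base_pos: "0 < b"
  using base_ge_2 by simp

lemma base_power_pos: "0 < b ^ j"
  using base_pos by simp

lemma digit_le: "digit b n k \<le> b - 1"
  using base_pos unfolding digit_def by (simp add: less_Suc_eq_le[symmetric])

lemma sdig_rec: "sdig b n = n mod b + sdig b (n div b)"
  using base_ge_2 by (cases "n = 0") (simp_all add: sdig.simps[of b n])

lemma sdig_legendre:
  assumes "n < b ^ M"
  shows "sdig b n + (b - 1) * (\<Sum>j<M. n div b ^ Suc j) = n"
  using assms
proof (induction M arbitrary: n)
  case (Suc M)
  have "n div b < b ^ M"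
    using Suc.prems base_pos by (simp add: div_less_iff_less_mult mult.commute)
  then have IH: "sdig b (n div b) + (b - 1) * (\<Sum>j<M. n div b div b ^ Suc j) = n div b"
    using Suc.IH by blast
  have "(\<Sum>j<Suc M. n div b ^ Suc j) = (\<Sum>j<Suc M. n div b div b ^ j)"
    by (simp add: div_mult2_eq)
  also have "\<dots> = n div b + (\<Sum>j<M. n div b div b ^ Suc j)"
    by (simp only: sum.lessThan_Suc_shift) simp
  finally have "sdig b n + (b - 1) * (\<Sum>j<Suc M. n div b ^ Suc j)
      = n mod b + (sdig b (n div b) + (b - 1) * (\<Sum>j<M. n div b div b ^ Suc j)) + (b - 1) * (n div b)"
    by (subst sdig_rec) (simp add: algebra_simps)
  also have "\<dots> = n mod b + b * (n div b)"
    using IH base_pos by (simp add: diff_mult_distrib)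
  finally show ?case by simp
qed simp

lemma sdig_mult_power_add:
  assumes "m < b ^ K"
  shows "sdig b (q * b ^ K + m) = sdig b q + sdig b m"
  using assms
proof (induction K arbitrary: m)
  case (Suc K)
  have "m div b < b ^ K"
    using Suc.prems base_pos by (simp add: div_less_iff_less_mult mult.commute)
  moreover have "q * b ^ Suc K + m = (q * b ^ K + m div b) * b + m mod b"
    by (simp add: algebra_simps)
  ultimately show ?case
    using Suc.IH sdig_rec[of "q * b ^ Suc K + m"] sdig_rec[of m] base_pos by simp
qed simp

end

definition carry :: "nat \<Rightarrow> nat \<Rightarrow> nat \<Rightarrow> nat \<Rightarrow> nat" where
  "carry b r j m = (m mod b ^ j + r mod b ^ j) div b ^ j"

definition carries :: "nat \<Rightarrow> nat \<Rightarrow> nat \<Rightarrow> nat \<Rightarrow> nat" where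
  "carries b r K m = (\<Sum>j<K. carry b r (Suc j) m)"

lemma carries_0 [simp]: "carries b r 0 m = 0"
  by (simp add: carries_def)

lemma carries_Suc: "carries b r (Suc K) m = carries b r K m + carry b r (Suc K) m"
  by (simp add: carries_def)

context digit_base
begin

lemma carry_eq: "carry b r j m = (if b ^ j \<le> m mod b ^ j + r mod b ^ j then 1 else 0)"
proof -
  have "m mod b ^ j + r mod b ^ j < 2 * b ^ j"
    using base_power_pos[of j] by (simp add: mult_2 add_strict_mono)
  then show ?thesis
    unfolding carry_def by (auto intro: div_nat_eqI)
qed

lemma carry_le_1: "carry b r j m \<le> 1"
  by (simp add: carry_eq)

lemma carries_le: "carries b r K m \<le> K"
proof -
  have "carries b r K m \<le> (\<Sum>j<K. 1)"
    unfolding carries_def by (rule sum_mono) (rule carry_le_1)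
  then show ?thesis by simp
qed

lemma Delta_eq_carries:
  assumes "r < b ^ K" "m < b ^ K"
  shows "Delta b r m = int (sdig b r) - int (b - 1) * int (carries b r K m)"
proof -
  have "b ^ K + b ^ K \<le> b ^ Suc K"
    using mult_right_mono[OF base_ge_2, of "b ^ K"] by (simp add: mult_2)
  then have mr: "m + r < b ^ Suc K" and m: "m < b ^ Suc K" and r: "r < b ^ Suc K"
    using assms by linarith+
  have split: "(m + r) div b ^ Suc j = m div b ^ Suc j + r div b ^ Suc j + carry b r (Suc j) m" for j
    unfolding carry_def by (rule div_add1_eq)
  have "carry b r (Suc K) m = 0"
    using mr m r by (simp add: carry_eq)
  then have "(\<Sum>j<Suc K. (m + r) div b ^ Suc j)
      = (\<Sum>j<Suc K. m div b ^ Suc j) + (\<Sum>j<Suc K. r div b ^ Suc j) + carries b r K m"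
    unfolding split carries_def by (simp add: sum.distrib)
  then have "sdig b (m + r) + (b - 1) * carries b r K m = sdig b m + sdig b r"
    using sdig_legendre[OF mr] sdig_legendre[OF m] sdig_legendre[OF r] by (simp add: distrib_left)
  then have "int (sdig b (m + r)) + int (b - 1) * int (carries b r K m) = int (sdig b m) + int (sdig b r)"
    by (metis of_nat_add of_nat_mult)
  then show ?thesis
    unfolding Delta_def by simp
qed

lemma Delta_mult_power_add:
  assumes "m + r < b ^ K"
  shows "Delta b r (q * b ^ K + m) = Delta b r m"
  using sdig_mult_power_add[OF assms, of q] sdig_mult_power_add[of m K q] assms
  unfolding Delta_def by (simp add: add.assoc)

lemma carry_Suc_le:
  assumes "r < b ^ j"
  shows "carry b r (Suc j) m \<le> carry b r j m"
proof -
  have "b ^ j \<le> b ^ Suc j"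
    using base_pos by simp
  then have rS: "r < b ^ Suc j"
    using assms by linarith
  show ?thesis
  proof (cases "b ^ Suc j \<le> m mod b ^ Suc j + r")
    case True
    have "m mod b ^ Suc j = b ^ j * (m div b ^ j mod b) + m mod b ^ j"
      by (simp only: power_Suc2 mod_mult2_eq)
    moreover have "b ^ j * (m div b ^ j mod b + 1) \<le> b ^ j * b"
      using base_pos by (intro mult_left_mono) (auto simp: Suc_le_eq)
    ultimately have "b ^ j \<le> m mod b ^ j + r"
      using True by (simp add: algebra_simps)
    then show ?thesis
      using assms rS by (simp add: carry_eq)
  qed (use rS in \<open>simp add: carry_eq\<close>)
qed

lemma carry_mult_power_add:
  assumes "j \<le> K"
  shows "carry b r j (q * b ^ K + m) = carry b r j m"
proof -
  have "q * b ^ K + m = m + (q * b ^ (K - j)) * b ^ j"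
    using assms by (simp add: power_add[symmetric])
  then have "(q * b ^ K + m) mod b ^ j = m mod b ^ j"
    by (simp only: mod_mult_self1)
  then show ?thesis
    unfolding carry_def by simp
qed

lemma carries_mult_power_add: "carries b r K (q * b ^ K + m) = carries b r K m"
  unfolding carries_def by (intro sum.cong refl carry_mult_power_add) auto

lemma carry_Suc_mult_power_add:
  assumes "m < b ^ K" "q < b"
  shows "carry b r (Suc K) (q * b ^ K + m) = (q + digit b r K + carry b r K m) div b"
proof -
  define B where "B = b ^ K"
  have "q * B + m < (q + 1) * B"
    using assms(1) unfolding B_def by simp
  also have "\<dots> \<le> b * B"
    using assms(2) by (intro mult_right_mono) auto
  finally have m_mod: "(q * B + m) mod (B * b) = q * B + m"
    by (simp add: mult.commute)
  have r_mod: "r mod (B * b) = B * digit b r K + r mod B"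
    unfolding digit_def B_def by (rule mod_mult2_eq)
  have "carry b r (Suc K) (q * B + m) = (q * B + m + (B * digit b r K + r mod B)) div (B * b)"
    unfolding carry_def power_Suc2 B_def[symmetric] by (simp only: m_mod r_mod)
  also have "\<dots> = ((m + r mod B) + (q + digit b r K) * B) div B div b"
    by (simp add: div_mult2_eq algebra_simps)
  also have "\<dots> = (q + digit b r K + (m + r mod B) div B) div b"
    using base_power_pos[of K] unfolding B_def by (simp add: add.commute)
  finally show ?thesis
    using assms(1) unfolding B_def carry_def by (simp add: add.assoc)
qed

lemma sum_lessThan_power_Suc:
  fixes g :: "nat \<Rightarrow> 'a::comm_monoid_add"
  shows "(\<Sum>m<b ^ Suc K. g m) = (\<Sum>m<b ^ K. \<Sum>q<b. g (q * b ^ K + m))"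
  using sum_lessThan_mult_blocks[of g b "b ^ K"] by (simp add: sum.swap[of _ "{..<b}"])

lemma sum_carry_top: "(\<Sum>m<b ^ K. carry b r K m) = r mod b ^ K"
proof -
  have "(\<Sum>m<b ^ K. carry b r K m) = card ({..<b ^ K} \<inter> {m. b ^ K \<le> m + r mod b ^ K})"
    by (simp add: carry_eq sum.If_cases)
  also have "{..<b ^ K} \<inter> {m. b ^ K \<le> m + r mod b ^ K} = {b ^ K - r mod b ^ K..<b ^ K}"
    by auto
  finally show ?thesis
    using base_power_pos[of K] by simp
qed

lemma card_carry_eq_1:
  assumes "k \<le> n"
  shows "card {m. m < b ^ n \<and> carry b r k m = 1} = b ^ (n - k) * (r mod b ^ k)"
proof -
  have "{m. m < b ^ n \<and> carry b r k m = 1} = {..<b ^ n} \<inter> {m. carry b r k m = 1}"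
    by auto
  then have "card {m. m < b ^ n \<and> carry b r k m = 1} = (\<Sum>m<b ^ n. if carry b r k m = 1 then 1 else 0)"
    by (simp add: sum.If_cases)
  also have "\<dots> = (\<Sum>m<b ^ n. carry b r k m)"
    by (intro sum.cong refl) (simp add: carry_eq)
  also have "\<dots> = (\<Sum>q<b ^ (n - k). \<Sum>m<b ^ k. carry b r k (q * b ^ k + m))"
    using sum_lessThan_mult_blocks[of "carry b r k" "b ^ (n - k)" "b ^ k"] assms
    by (simp add: power_add[symmetric])
  also have "\<dots> = b ^ (n - k) * (r mod b ^ k)"
    by (simp add: carry_mult_power_add sum_carry_top)
  finally show ?thesis .
qed

end

definition carries_count :: "nat \<Rightarrow> nat \<Rightarrow> nat \<Rightarrow> nat \<Rightarrow> nat" where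
  "carries_count b r n k = card {m. m < b ^ n \<and> carries b r n m = k}"

locale digit_shift = digit_base +
  fixes r :: nat
  assumes shift_pos: "1 \<le> r"
begin

lemma shift_less_power_ndigits: "r < b ^ ndigits b r"
proof -
  have "r < 2 ^ r"
    by (rule less_exp)
  also have "2 ^ r \<le> b ^ r"
    using base_ge_2 by (rule power_mono) simp
  finally show ?thesis
    unfolding ndigits_def by (rule LeastI)
qed

lemma ndigits_pos: "0 < ndigits b r"
proof (rule ccontr)
  assume "\<not> 0 < ndigits b r"
  then show False
    using shift_less_power_ndigits shift_pos by simp
qed

lemma power_ndigits_minus_1_le: "b ^ (ndigits b r - 1) \<le> r"
proof -
  have "\<not> r < b ^ (ndigits b r - 1)"
    unfolding ndigits_def by (rule not_less_Least) (use ndigits_pos in \<open>simp add: ndigits_def\<close>)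
  then show ?thesis by simp
qed

lemma shift_less_power:
  assumes "ndigits b r \<le> j"
  shows "r < b ^ j"
proof -
  have "b ^ ndigits b r \<le> b ^ j"
    using assms base_pos by (intro power_increasing) auto
  then show ?thesis
    using shift_less_power_ndigits by linarith
qed

lemma digit_ge_ndigits: "ndigits b r \<le> j \<Longrightarrow> digit b r j = 0"
  using shift_less_power by (simp add: digit_def)

lemma digit_ndigits_minus_1_neq_0: "digit b r (ndigits b r - 1) \<noteq> 0"
proof -
  have "ndigits b r = Suc (ndigits b r - 1)"
    using ndigits_pos by simp
  then have "b ^ ndigits b r = b * b ^ (ndigits b r - 1)"
    by (metis power_Suc)
  then have "r div b ^ (ndigits b r - 1) < b"
    using shift_less_power_ndigits by (simp add: div_less_iff_less_mult[OF base_power_pos] mult.commute)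
  moreover have "0 < r div b ^ (ndigits b r - 1)"
    using power_ndigits_minus_1_le base_pos by (simp add: div_greater_zero_iff)
  ultimately show ?thesis
    by (simp add: digit_def)
qed

lemma carry_eq_0_propagate:
  assumes "ndigits b r \<le> k" "carry b r k m = 0" "k \<le> j"
  shows "carry b r j m = 0"
  using assms(3)
proof (induction j rule: dec_induct)
  case (step j)
  then show ?case
    using carry_Suc_le[OF shift_less_power, of j m] assms(1) by simp
qed (use assms(2) in simp)

lemma carry_eq_1_if_le_carries:
  assumes "ndigits b r \<le> k" "k \<le> carries b r n m"
  shows "carry b r k m = 1"
proof (rule ccontr)
  assume "carry b r k m \<noteq> 1"
  then have k0: "carry b r k m = 0"
    using carry_le_1[of r k m] by simp
  have bound: "carries b r n' m \<le> k - 1" for n'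
  proof (induction n')
    case (Suc n')
    show ?case
    proof (cases "k \<le> Suc n'")
      case True
      then show ?thesis
        using Suc carry_eq_0_propagate[OF assms(1) k0] by (simp add: carries_Suc)
    next
      case False
      then show ?thesis
        using carries_le[of r n' m] carry_le_1[of r "Suc n'" m] by (simp add: carries_Suc)
    qed
  qed simp
  have "k \<le> k - 1"
    using assms(2) bound[of n] by (rule order_trans)
  then show False
    using assms(1) ndigits_pos by linarith
qed

lemma carries_count_le_tail:
  assumes "ndigits b r \<le> k" "k \<le> n"
  shows "carries_count b r n k \<le> b ^ (n - k) * r"
proof -
  have "carries_count b r n k \<le> card {m. m < b ^ n \<and> carry b r k m = 1}"
    unfolding carries_count_def
    by (rule card_mono) (use carry_eq_1_if_le_carries[OF assms(1)] in auto)
  also have "\<dots> \<le> b ^ (n - k) * r"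
    unfolding card_carry_eq_1[OF assms(2)] by simp
  finally show ?thesis .
qed

lemma carries_count_eq_0:
  assumes "n < k"
  shows "carries_count b r n k = 0"
proof -
  have "carries b r n m \<noteq> k" for m
    using carries_le[of r n m] assms by simp
  then show ?thesis
    unfolding carries_count_def by simp
qed

lemma carries_count_le: "carries_count b r n k \<le> b ^ n"
proof -
  have "carries_count b r n k \<le> card {..<b ^ n}"
    unfolding carries_count_def by (rule card_mono) auto
  then show ?thesis by simp
qed

lemma carries_count_decay:
  "real (carries_count b r n k) \<le> real r * real b ^ ndigits b r * real b ^ n / 2 ^ k"
proof -
  have b2: "(2::real) \<le> real b"
    using base_ge_2 by simp
  have two_pow: "(2::real) ^ k \<le> real b ^ k"
    using b2 by (intro power_mono) auto
  consider "k < ndigits b r" | "ndigits b r \<le> k" "k \<le> n" | "n < k"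
    by linarith
  then show ?thesis
  proof cases
    case 1
    have "real b ^ k \<le> real b ^ ndigits b r"
      using 1 b2 by (intro power_increasing) auto
    then have "(2::real) ^ k * 1 \<le> real b ^ ndigits b r * real r"
      using two_pow shift_pos by (intro mult_mono) auto
    then have "1 \<le> real r * real b ^ ndigits b r / 2 ^ k"
      by (simp add: field_simps)
    have "real (carries_count b r n k) \<le> real b ^ n"
      using carries_count_le[of n k] by (simp flip: of_nat_power)
    also have "\<dots> \<le> real b ^ n * (real r * real b ^ ndigits b r / 2 ^ k)"
      using mult_left_mono[OF \<open>1 \<le> _\<close>, of "real b ^ n"] by simp
    finally show ?thesis
      by (simp add: mult_ac)
  next
    case 2
    have "real (carries_count b r n k) \<le> real b ^ (n - k) * real r"
      using carries_count_le_tail[OF 2] by (simp flip: of_nat_power of_nat_mult)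
    also have "\<dots> = real b ^ n * real r / real b ^ k"
      using 2 b2 by (simp add: power_diff)
    also have "\<dots> \<le> real b ^ n * real r / 2 ^ k"
      using two_pow b2 by (intro divide_left_mono mult_pos_pos) auto
    also have "\<dots> \<le> real r * real b ^ ndigits b r * real b ^ n / 2 ^ k"
      using mult_left_mono[OF one_le_power[of "real b" "ndigits b r"], of "real b ^ n * real r"] b2
      by (intro divide_right_mono) (auto simp: mult_ac)
    finally show ?thesis .
  qed (simp add: carries_count_eq_0)
qed

end

section \<open>The limit law \<open>mu\<close> and its moments\<close>

lemma sum_near_block_multiple:
  fixes f :: "nat \<Rightarrow> real" and B N :: nat
  assumes B: "0 < B" and f01: "\<And>n. 0 \<le> f n \<and> f n \<le> 1"
    and block: "\<And>q. \<bar>(\<Sum>m<B. f (q * B + m)) - (\<Sum>m<B. f m)\<bar> \<le> e"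
  shows "\<bar>(\<Sum>n<N. f n) - real (N div B) * (\<Sum>m<B. f m)\<bar> \<le> real (N div B) * e + real B"
proof -
  define Q where "Q = N div B"
  have QB: "Q * B \<le> N" "N \<le> Q * B + B"
    using div_mult_mod_eq[of N B] mod_less_divisor[OF B, of N] unfolding Q_def by linarith+
  have "(\<Sum>n\<in>{Q * B..<N}. f n) \<le> real (N - Q * B)"
    using f01 sum_mono[of "{Q * B..<N}" f "\<lambda>_. 1"] by simp
  also have "\<dots> \<le> real B"
    using QB by (subst of_nat_le_iff) linarith
  finally have tail: "0 \<le> (\<Sum>n\<in>{Q * B..<N}. f n)" "(\<Sum>n\<in>{Q * B..<N}. f n) \<le> real B"
    using f01 by (auto intro: sum_nonneg)
  have "(\<Sum>n<N. f n) = (\<Sum>n<Q * B. f n) + (\<Sum>n\<in>{Q * B..<N}. f n)"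
    using sum.atLeastLessThan_concat[of 0 "Q * B" N f] QB by (simp add: atLeast0LessThan)
  moreover have "\<bar>(\<Sum>n<Q * B. f n) - real Q * (\<Sum>m<B. f m)\<bar> = \<bar>\<Sum>q<Q. (\<Sum>m<B. f (q * B + m)) - (\<Sum>m<B. f m)\<bar>"
    by (simp add: sum_lessThan_mult_blocks sum_subtractf)
  moreover have "\<dots> \<le> real Q * e"
    using order_trans[OF sum_abs sum_mono[of "{..<Q}" _ "\<lambda>_. e"]] block by simp
  ultimately show ?thesis
    using tail unfolding Q_def[symmetric] by linarith
qed

lemma average_near_block_average:
  fixes f :: "nat \<Rightarrow> real" and B N :: nat
  assumes B: "0 < B" and N: "0 < N" and f01: "\<And>n. 0 \<le> f n \<and> f n \<le> 1"
    and block: "\<And>q. \<bar>(\<Sum>m<B. f (q * B + m)) - (\<Sum>m<B. f m)\<bar> \<le> e"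
  shows "\<bar>(\<Sum>n<N. f n) / N - (\<Sum>m<B. f m) / B\<bar> \<le> e / B + 2 * B / N"
proof -
  define G where "G = (\<Sum>m<B. f m)"
  define Q where "Q = N div B"
  have e: "0 \<le> e"
    using block[of 0] by linarith
  have G: "0 \<le> G" "G \<le> real B"
    unfolding G_def using f01 sum_mono[of "{..<B}" f "\<lambda>_. 1"] by (auto intro: sum_nonneg)
  have "Q * B \<le> N" "N \<le> Q * B + B"
    using div_mult_mod_eq[of N B] mod_less_divisor[OF B, of N] unfolding Q_def by linarith+
  then have QB: "real Q * real B \<le> real N" "real N \<le> real Q * real B + real B"
    by (simp_all only: of_nat_mult[symmetric] of_nat_add[symmetric] of_nat_le_iff)
  have "\<bar>(\<Sum>n<N. f n) * B - G * N\<bar>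
      = \<bar>((\<Sum>n<N. f n) - real Q * G) * B + G * (real Q * B - N)\<bar>"
    by (simp add: algebra_simps)
  also have "\<dots> \<le> (real Q * e + B) * B + B * B"
    using sum_near_block_multiple[OF B f01 block, of N, folded G_def Q_def] G QB B
    by (intro order_trans[OF abs_triangle_ineq] add_mono)
       (auto simp: abs_mult intro!: mult_right_mono mult_mono)
  also have "\<dots> \<le> e * N + 2 * B * B"
    using mult_right_mono[OF QB(1) e] by (simp add: algebra_simps)
  finally have key: "\<bar>(\<Sum>n<N. f n) * B - G * N\<bar> \<le> e * N + 2 * B * B" .
  have "\<bar>(\<Sum>n<N. f n) / N - G / B\<bar> = \<bar>(\<Sum>n<N. f n) * B - G * N\<bar> / (N * B)"
    using N B by (simp add: field_simps)
  also have "\<dots> \<le> (e * N + 2 * B * B) / (N * B)"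
    using key by (intro divide_right_mono) auto
  also have "\<dots> = e / B + 2 * B / N"
    using N B by (simp add: field_simps)
  finally show ?thesis
    unfolding G_def .
qed

lemma convergent_if_uniformly_approximated:
  fixes a p e c :: "nat \<Rightarrow> real"
  assumes approx: "\<And>K N. Kmin \<le> K \<Longrightarrow> 0 < N \<Longrightarrow> \<bar>a N - p K\<bar> \<le> e K + c K / N"
    and e: "e \<longlonglongrightarrow> 0"
  shows "convergent a"
  unfolding Cauchy_convergent_iff[symmetric]
proof (rule CauchyI)
  fix \<epsilon> :: real
  assume "0 < \<epsilon>"
  then have "eventually (\<lambda>K. e K < \<epsilon> / 4 \<and> Kmin \<le> K) sequentially"
    by (intro eventually_conj order_tendstoD(2)[OF e] eventually_ge_at_top) simp
  then obtain K where K: "e K < \<epsilon> / 4" "Kmin \<le> K"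
    using eventually_happens by fastforce
  obtain M where M: "\<And>N. M \<le> N \<Longrightarrow> c K / real N < \<epsilon> / 4"
    using order_tendstoD(2)[OF lim_const_over_n[of "c K"], of "\<epsilon> / 4"] \<open>0 < \<epsilon>\<close>
    unfolding eventually_sequentially by auto
  have close: "\<bar>a N - p K\<bar> < \<epsilon> / 2" if "max M 1 \<le> N" for N
  proof -
    have "M \<le> N" "0 < N"
      using that by auto
    then show ?thesis
      using approx[OF K(2), of N] M[of N] K(1) by linarith
  qed
  have "norm (a m - a n) < \<epsilon>" if "max M 1 \<le> m" "max M 1 \<le> n" for m n
    using close[OF that(1)] close[OF that(2)] unfolding real_norm_def abs_less_iff by linarith
  then show "\<exists>M. \<forall>m\<ge>M. \<forall>n\<ge>M. norm (a m - a n) < \<epsilon>"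
    by blast
qed

lemma limit_approximated:
  fixes a :: "nat \<Rightarrow> real"
  assumes "a \<longlonglongrightarrow> l" and "\<And>N. 0 < N \<Longrightarrow> \<bar>a N - p\<bar> \<le> e + c / N"
  shows "\<bar>l - p\<bar> \<le> e"
proof (rule LIMSEQ_le)
  show "(\<lambda>N. \<bar>a N - p\<bar>) \<longlonglongrightarrow> \<bar>l - p\<bar>"
    by (intro tendsto_intros assms(1))
  show "(\<lambda>N. e + c / N) \<longlonglongrightarrow> e"
    using tendsto_add[OF tendsto_const lim_const_over_n, of e c] by simp
  show "\<exists>M. \<forall>N\<ge>M. \<bar>a N - p\<bar> \<le> e + c / N"
    using assms(2) by (intro exI[of _ 1]) auto
qed

definition delta_freq :: "nat \<Rightarrow> nat \<Rightarrow> nat \<Rightarrow> int \<Rightarrow> real" where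
  "delta_freq b r K d = real (card {m. m < b ^ K \<and> Delta b r m = d}) / real b ^ K"

context digit_shift
begin

text \<open>\<open>Delta\<close> is \<open>b ^ K\<close>-periodic except on the last \<open>r\<close> residues of each period.\<close>
lemma density_near_delta_freq:
  fixes K N :: nat
  assumes rK: "r \<le> b ^ K" and N: "0 < N"
  shows "\<bar>real (card {n. n < N \<and> Delta b r n = d}) / real N - delta_freq b r K d\<bar>
    \<le> real r / real b ^ K + 2 * real b ^ K / real N"
proof -
  define f where "f n = (if Delta b r n = d then 1 else 0 :: real)" for n
  define B where "B = b ^ K"
  have sum_split: "(\<Sum>m<B. g m) = (\<Sum>m<B - r. g m) + (\<Sum>m\<in>{B - r..<B}. g m)" for g :: "nat \<Rightarrow> real"
    using sum.atLeastLessThan_concat[of 0 "B - r" B g] rK unfolding B_def by (simp add: atLeast0LessThan)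
  have tail: "0 \<le> (\<Sum>m\<in>{B - r..<B}. f (s + m)) \<and> (\<Sum>m\<in>{B - r..<B}. f (s + m)) \<le> r" for s
    using sum_mono[of "{B - r..<B}" "\<lambda>m. f (s + m)" "\<lambda>_. 1"] rK
    unfolding B_def f_def by (auto intro: sum_nonneg)
  have "\<bar>(\<Sum>m<B. f (q * B + m)) - (\<Sum>m<B. f m)\<bar> \<le> r" for q
  proof -
    have "(\<Sum>m<B - r. f (q * B + m)) = (\<Sum>m<B - r. f m)"
      using Delta_mult_power_add rK unfolding f_def B_def by (intro sum.cong) auto
    then show ?thesis
      using sum_split[of "\<lambda>m. f (q * B + m)"] sum_split[of f] tail[of "q * B"] tail[of 0]
      unfolding abs_le_iff by simp
  qed
  then have "\<bar>(\<Sum>n<N. f n) / N - (\<Sum>m<B. f m) / B\<bar> \<le> r / B + 2 * B / N"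
    using base_power_pos N by (intro average_near_block_average) (auto simp: f_def B_def)
  then show ?thesis
    unfolding delta_freq_def f_def B_def card_lessThan_filter_eq_sum by simp
qed

lemma shift_div_power_tendsto_0: "(\<lambda>K. real r / real b ^ K) \<longlonglongrightarrow> 0"
  using base_ge_2 by (intro LIMSEQ_divide_realpow_zero) simp

lemma density_tendsto_mu:
  "(\<lambda>N. real (card {n. n < N \<and> Delta b r n = d}) / real N) \<longlonglongrightarrow> mu b r d"
proof -
  have "convergent (\<lambda>N. real (card {n. n < N \<and> Delta b r n = d}) / real N)"
  proof (rule convergent_if_uniformly_approximated[OF _ shift_div_power_tendsto_0])
    fix K N :: nat
    assume "ndigits b r \<le> K" "0 < N"
    then show "\<bar>real (card {n. n < N \<and> Delta b r n = d}) / real N - delta_freq b r K d\<bar>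
        \<le> real r / real b ^ K + 2 * real b ^ K / real N"
      using density_near_delta_freq less_imp_le[OF shift_less_power] by blast
  qed
  then show ?thesis
    unfolding mu_def by (rule convergent_LIMSEQ_iff[THEN iffD1])
qed

lemma mu_near_delta_freq:
  assumes "ndigits b r \<le> K"
  shows "\<bar>mu b r d - delta_freq b r K d\<bar> \<le> real r / real b ^ K"
  using density_tendsto_mu density_near_delta_freq[OF less_imp_le[OF shift_less_power[OF assms]]]
  by (rule limit_approximated)

lemma delta_freq_tendsto_mu: "(\<lambda>K. delta_freq b r K d) \<longlonglongrightarrow> mu b r d"
proof -
  have "(\<lambda>K. delta_freq b r K d - mu b r d) \<longlonglongrightarrow> 0"
  proof (rule Lim_transform_bound[OF _ shift_div_power_tendsto_0])
    show "\<forall>\<^sub>F K in sequentially. norm (delta_freq b r K d - mu b r d) \<le> norm (real r / real b ^ K)"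
      using eventually_ge_at_top[of "ndigits b r"]
      by eventually_elim (use mu_near_delta_freq in \<open>auto simp: abs_minus_commute\<close>)
  qed
  then show ?thesis
    by (rule LIM_zero_cancel)
qed

end

lemma summable_square_div_power2: "summable (\<lambda>k::nat. (real k + 1) ^ 2 / 2 ^ k)"
proof (rule summable_ratio_test[where c = "3/4" and N = 4])
  fix k :: nat
  assume "4 \<le> k"
  then have "0 \<le> (real k - 4) * (real k + 2)"
    by simp
  then have "2 * (real k + 2) ^ 2 \<le> 3 * (real k + 1) ^ 2"
    by (simp add: power2_eq_square algebra_simps)
  then have "(real k + 2) ^ 2 / 2 ^ Suc k \<le> 3/4 * ((real k + 1) ^ 2 / 2 ^ k)"
    by (simp add: field_simps)
  then show "norm ((real (Suc k) + 1) ^ 2 / 2 ^ Suc k) \<le> 3/4 * norm ((real k + 1) ^ 2 / 2 ^ k)"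
    by (simp add: add.commute add.left_commute)
qed simp

definition delta_of_carries :: "nat \<Rightarrow> nat \<Rightarrow> nat \<Rightarrow> int" where
  "delta_of_carries b r k = int (sdig b r) - int (b - 1) * int k"

context digit_shift
begin

lemma inj_delta_of_carries: "inj (delta_of_carries b r)"
  using base_ge_2 unfolding delta_of_carries_def inj_def by auto

lemma Delta_eq_delta_of_carries:
  "ndigits b r \<le> n \<Longrightarrow> m < b ^ n \<Longrightarrow> Delta b r m = delta_of_carries b r (carries b r n m)"
  using Delta_eq_carries[OF shift_less_power] unfolding delta_of_carries_def by simp

lemma delta_freq_delta_of_carries:
  assumes "ndigits b r \<le> n"
  shows "delta_freq b r n (delta_of_carries b r k) = real (carries_count b r n k) / real b ^ n"
proof -
  have "{m. m < b ^ n \<and> Delta b r m = delta_of_carries b r k} = {m. m < b ^ n \<and> carries b r n m = k}"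
    using Delta_eq_delta_of_carries[OF assms] inj_delta_of_carries by (auto simp: inj_eq)
  then show ?thesis
    unfolding delta_freq_def carries_count_def by simp
qed

lemma mu_eq_0_outside:
  assumes "d \<notin> range (delta_of_carries b r)"
  shows "mu b r d = 0"
proof -
  have "eventually (\<lambda>n. delta_freq b r n d = 0) sequentially"
    using eventually_ge_at_top[of "ndigits b r"]
    by eventually_elim (use assms Delta_eq_delta_of_carries in \<open>auto simp: delta_freq_def\<close>)
  then show ?thesis
    using LIMSEQ_unique[OF delta_freq_tendsto_mu tendsto_eventually] by blast
qed

lemma sum_Delta_eq_sum_carries_count:
  assumes "ndigits b r \<le> n"
  shows "(\<Sum>m<b ^ n. h (Delta b r m)) = (\<Sum>k\<le>n. h (delta_of_carries b r k) * real (carries_count b r n k))"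
proof -
  have "(\<Sum>m<b ^ n. h (Delta b r m)) = (\<Sum>m<b ^ n. h (delta_of_carries b r (carries b r n m)))"
    using Delta_eq_delta_of_carries[OF assms] by simp
  also have "\<dots> = (\<Sum>k\<le>n. \<Sum>m\<in>{m\<in>{..<b ^ n}. carries b r n m = k}. h (delta_of_carries b r (carries b r n m)))"
    by (rule sum.group[symmetric]) (auto simp: carries_le)
  also have "\<dots> = (\<Sum>k\<le>n. h (delta_of_carries b r k) * real (carries_count b r n k))"
    unfolding carries_count_def by (intro sum.cong refl) (simp add: Collect_conj_eq lessThan_def)
  finally show ?thesis .
qed

lemma infsum_mu_eq_suminf:
  assumes "summable (\<lambda>k. norm (h (delta_of_carries b r k) * mu b r (delta_of_carries b r k)))"
  shows "(\<Sum>\<^sub>\<infinity>d. h d * mu b r d) = (\<Sum>k. h (delta_of_carries b r k) * mu b r (delta_of_carries b r k))"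
proof -
  have "(\<Sum>\<^sub>\<infinity>d. h d * mu b r d) = (\<Sum>\<^sub>\<infinity>d\<in>range (delta_of_carries b r). h d * mu b r d)"
    by (rule infsum_cong_neutral) (simp_all add: mu_eq_0_outside)
  also have "\<dots> = (\<Sum>\<^sub>\<infinity>k. h (delta_of_carries b r k) * mu b r (delta_of_carries b r k))"
    by (simp add: infsum_reindex[OF inj_delta_of_carries] comp_def)
  also have "\<dots> = (\<Sum>k. h (delta_of_carries b r k) * mu b r (delta_of_carries b r k))"
    using norm_summable_imp_has_sum[OF assms summable_sums[OF summable_norm_cancel[OF assms]]]
    by (rule infsumI)
  finally show ?thesis .
qed

lemma average_eq_suminf_carries_count:
  assumes "ndigits b r \<le> n"
  shows "(\<Sum>m<b ^ n. h (Delta b r m)) / real b ^ n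
    = (\<Sum>k. h (delta_of_carries b r k) * real (carries_count b r n k) / real b ^ n)"
proof -
  have "(\<Sum>k. h (delta_of_carries b r k) * real (carries_count b r n k) / real b ^ n)
      = (\<Sum>k\<le>n. h (delta_of_carries b r k) * real (carries_count b r n k) / real b ^ n)"
    by (rule suminf_finite) (auto simp: carries_count_eq_0)
  then show ?thesis
    unfolding sum_Delta_eq_sum_carries_count[OF assms] by (simp add: sum_divide_distrib)
qed

lemma weighted_carries_count_le:
  assumes growth: "\<And>k. \<bar>h (delta_of_carries b r k)\<bar> \<le> H * (real k + 1) ^ 2"
  shows "\<bar>h (delta_of_carries b r k) * real (carries_count b r n k) / real b ^ n\<bar>
    \<le> H * (real r * real b ^ ndigits b r) * ((real k + 1) ^ 2 / 2 ^ k)"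
proof -
  have H: "0 \<le> H"
    using growth[of 0] abs_ge_zero[of "h (delta_of_carries b r 0)"] by simp
  have decay: "real (carries_count b r n k) / real b ^ n \<le> real r * real b ^ ndigits b r / 2 ^ k"
    using carries_count_decay[of n k] base_power_pos[of n] by (simp add: field_simps)
  have "\<bar>h (delta_of_carries b r k) * real (carries_count b r n k) / real b ^ n\<bar>
      = \<bar>h (delta_of_carries b r k)\<bar> * (real (carries_count b r n k) / real b ^ n)"
    by (simp add: abs_mult)
  also have "\<dots> \<le> (H * (real k + 1) ^ 2) * (real r * real b ^ ndigits b r / 2 ^ k)"
    using growth decay H by (intro mult_mono) auto
  also have "\<dots> = H * (real r * real b ^ ndigits b r) * ((real k + 1) ^ 2 / 2 ^ k)"
    by (simp add: field_simps)
  finally show ?thesis .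
qed

text \<open>The tail of the law of the number of carries is geometric uniformly in \<open>n\<close>, so Tannery's
  theorem lets the limit \<open>n \<rightarrow> \<infinity>\<close> pass through the sum over \<open>k\<close>.\<close>
lemma average_tendsto_moment:
  fixes h :: "int \<Rightarrow> real"
  assumes growth: "\<And>k. \<bar>h (delta_of_carries b r k)\<bar> \<le> H * (real k + 1) ^ 2"
  shows "(\<lambda>n. (\<Sum>m<b ^ n. h (Delta b r m)) / real b ^ n) \<longlonglongrightarrow> (\<Sum>\<^sub>\<infinity>d. h d * mu b r d)"
proof -
  define a where "a k n = h (delta_of_carries b r k) * real (carries_count b r n k) / real b ^ n" for k n
  define M where "M k = H * (real r * real b ^ ndigits b r) * ((real k + 1) ^ 2 / 2 ^ k)" for k
  define c where "c k = h (delta_of_carries b r k) * mu b r (delta_of_carries b r k)" for k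
  have lim: "(\<lambda>n. a k n) \<longlonglongrightarrow> c k" for k
  proof (rule Lim_transform_eventually)
    show "(\<lambda>n. h (delta_of_carries b r k) * delta_freq b r n (delta_of_carries b r k)) \<longlonglongrightarrow> c k"
      unfolding c_def by (intro tendsto_intros delta_freq_tendsto_mu)
    show "\<forall>\<^sub>F n in sequentially. h (delta_of_carries b r k) * delta_freq b r n (delta_of_carries b r k) = a k n"
      using eventually_ge_at_top[of "ndigits b r"]
      by eventually_elim (simp add: a_def delta_freq_delta_of_carries)
  qed
  have "summable M"
    unfolding M_def by (intro summable_mult summable_square_div_power2)
  then have T: "summable (\<lambda>k. norm (c k)) \<and> ((\<lambda>n. \<Sum>k. a k n) \<longlongrightarrow> (\<Sum>k. c k)) sequentially"
    using tannerys_theorem[OF lim _ \<open>summable M\<close>] weighted_carries_count_le[OF growth]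
    unfolding a_def M_def by (simp add: always_eventually)
  have "(\<lambda>n. (\<Sum>m<b ^ n. h (Delta b r m)) / real b ^ n) \<longlonglongrightarrow> (\<Sum>k. c k)"
  proof (rule Lim_transform_eventually)
    show "(\<lambda>n. \<Sum>k. a k n) \<longlonglongrightarrow> (\<Sum>k. c k)"
      using T by blast
    show "\<forall>\<^sub>F n in sequentially. (\<Sum>k. a k n) = (\<Sum>m<b ^ n. h (Delta b r m)) / real b ^ n"
      using eventually_ge_at_top[of "ndigits b r"]
      by eventually_elim (simp add: a_def average_eq_suminf_carries_count)
  qed
  then show ?thesis
    using infsum_mu_eq_suminf[of h] T unfolding c_def by simp
qed

end

section \<open>Mean and variance of the number of carries\<close>

lemma sum_lessThan_div_eq:
  fixes b t :: nat
  assumes "t \<le> b"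
  shows "(\<Sum>q<b. (q + t) div b) = t"
proof -
  have "(\<Sum>q<b. (q + t) div b) = (\<Sum>q<b. if b \<le> q + t then 1 else 0)"
    using assms by (intro sum.cong refl) (auto intro: div_nat_eqI)
  also have "\<dots> = card ({..<b} \<inter> {q. b \<le> q + t})"
    by (simp add: sum.If_cases)
  also have "{..<b} \<inter> {q. b \<le> q + t} = {b - t..<b}"
    using assms by auto
  finally show ?thesis
    using assms by simp
qed

definition carries_sum :: "nat \<Rightarrow> nat \<Rightarrow> nat \<Rightarrow> nat" where
  "carries_sum b r K = (\<Sum>m<b ^ K. carries b r K m)"

definition carries_sq_sum :: "nat \<Rightarrow> nat \<Rightarrow> nat \<Rightarrow> nat" where
  "carries_sq_sum b r K = (\<Sum>m<b ^ K. (carries b r K m)\<^sup>2)"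

definition carry_carries_sum :: "nat \<Rightarrow> nat \<Rightarrow> nat \<Rightarrow> nat" where
  "carry_carries_sum b r K = (\<Sum>m<b ^ K. carry b r K m * carries b r K m)"

context digit_base
begin

text \<open>Over the \<open>b\<close> choices of digit \<open>K\<close> of \<open>m\<close>, the carry into position \<open>K + 1\<close> occurs exactly
  \<open>digit b r K + carry b r K m\<close> times.\<close>
lemma sums_over_digit:
  fixes r K m :: nat
  assumes m: "m < b ^ K"
  defines "a \<equiv> digit b r K" and "c \<equiv> carry b r K m" and "x \<equiv> carries b r K m"
  shows "(\<Sum>q<b. carries b r (Suc K) (q * b ^ K + m)) = b * x + (a + c)"
    and "(\<Sum>q<b. (carries b r (Suc K) (q * b ^ K + m))\<^sup>2) = b * x\<^sup>2 + (2 * x + 1) * (a + c)"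
    and "(\<Sum>q<b. carry b r (Suc K) (q * b ^ K + m) * carries b r (Suc K) (q * b ^ K + m))
      = (x + 1) * (a + c)"
proof -
  define e where "e q = carry b r (Suc K) (q * b ^ K + m)" for q
  have "a + c \<le> b"
    using digit_le[of r K] carry_le_1[of r K m] base_ge_2 unfolding a_def c_def by linarith
  then have sum_e: "(\<Sum>q<b. e q) = a + c"
    using sum_lessThan_div_eq[of "a + c" b]
    by (simp add: e_def carry_Suc_mult_power_add[OF m] a_def c_def add.assoc)
  have e01: "e q * e q = e q" for q
    using carry_le_1[of r "Suc K" "q * b ^ K + m"] unfolding e_def by (cases "e q") auto
  have carries_e: "carries b r (Suc K) (q * b ^ K + m) = x + e q" for q
    unfolding carries_Suc carries_mult_power_add x_def e_def ..
  show "(\<Sum>q<b. carries b r (Suc K) (q * b ^ K + m)) = b * x + (a + c)"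
    unfolding carries_e using sum_e by (simp add: sum.distrib)
  have "(x + e q)\<^sup>2 = x\<^sup>2 + (2 * x + 1) * e q" for q
    using e01[of q] by (simp add: power2_eq_square algebra_simps)
  then show "(\<Sum>q<b. (carries b r (Suc K) (q * b ^ K + m))\<^sup>2) = b * x\<^sup>2 + (2 * x + 1) * (a + c)"
    unfolding carries_e using sum_e by (simp add: sum.distrib sum_distrib_left[symmetric])
  have "e q * (x + e q) = (x + 1) * e q" for q
    using e01[of q] by (simp add: algebra_simps)
  then have "(\<Sum>q<b. e q * (x + e q)) = (\<Sum>q<b. (x + 1) * e q)"
    by simp
  also have "\<dots> = (x + 1) * (a + c)"
    unfolding sum_distrib_left[symmetric] sum_e ..
  finally have "(\<Sum>q<b. e q * (x + e q)) = (x + 1) * (a + c)" .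
  then show "(\<Sum>q<b. carry b r (Suc K) (q * b ^ K + m) * carries b r (Suc K) (q * b ^ K + m))
      = (x + 1) * (a + c)"
    unfolding carries_e e_def .
qed

lemma carries_sums_Suc:
  fixes r K :: nat
  defines "a \<equiv> digit b r K" and "t \<equiv> r mod b ^ K"
  shows "carries_sum b r (Suc K) = b * carries_sum b r K + a * b ^ K + t"
    and "carries_sq_sum b r (Suc K)
      = b * carries_sq_sum b r K + 2 * a * carries_sum b r K + 2 * carry_carries_sum b r K + a * b ^ K + t"
    and "carry_carries_sum b r (Suc K) = a * carries_sum b r K + carry_carries_sum b r K + a * b ^ K + t"
proof -
  define x where "x m = carries b r K m" for m
  define c where "c m = carry b r K m" for m
  have t: "(\<Sum>m<b ^ K. c m) = t"
    unfolding c_def t_def by (rule sum_carry_top)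
  have "carries_sum b r (Suc K) = (\<Sum>m<b ^ K. b * x m + (a + c m))"
    unfolding carries_sum_def sum_lessThan_power_Suc
    by (intro sum.cong refl) (simp add: sums_over_digit x_def a_def c_def)
  then show "carries_sum b r (Suc K) = b * carries_sum b r K + a * b ^ K + t"
    using t by (simp add: sum.distrib carries_sum_def x_def sum_distrib_left)
  have "carries_sq_sum b r (Suc K) = (\<Sum>m<b ^ K. b * (x m)\<^sup>2 + (2 * x m + 1) * (a + c m))"
    unfolding carries_sq_sum_def sum_lessThan_power_Suc
    by (intro sum.cong refl) (simp add: sums_over_digit x_def a_def c_def)
  also have "\<dots> = (\<Sum>m<b ^ K. b * (x m)\<^sup>2 + 2 * a * x m + 2 * (c m * x m) + a + c m)"
    by (intro sum.cong refl) (simp add: algebra_simps)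
  finally have "carries_sq_sum b r (Suc K)
      = (\<Sum>m<b ^ K. b * (x m)\<^sup>2 + 2 * a * x m + 2 * (c m * x m) + a + c m)" .
  then show "carries_sq_sum b r (Suc K)
      = b * carries_sq_sum b r K + 2 * a * carries_sum b r K + 2 * carry_carries_sum b r K + a * b ^ K + t"
    using t by (simp add: sum.distrib carries_sum_def carries_sq_sum_def carry_carries_sum_def
        x_def c_def sum_distrib_left)
  have "carry_carries_sum b r (Suc K) = (\<Sum>m<b ^ K. (x m + 1) * (a + c m))"
    unfolding carry_carries_sum_def sum_lessThan_power_Suc
    by (intro sum.cong refl) (simp add: sums_over_digit x_def a_def c_def)
  also have "\<dots> = (\<Sum>m<b ^ K. a * x m + c m * x m + a + c m)"
    by (intro sum.cong refl) (simp add: algebra_simps)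
  finally have "carry_carries_sum b r (Suc K) = (\<Sum>m<b ^ K. a * x m + c m * x m + a + c m)" .
  then show "carry_carries_sum b r (Suc K) = a * carries_sum b r K + carry_carries_sum b r K + a * b ^ K + t"
    using t by (simp add: sum.distrib carries_sum_def carry_carries_sum_def x_def c_def sum_distrib_left)
qed

end

text \<open>For \<open>m\<close> uniform in \<open>{0..<b ^ K}\<close>, the top carry \<open>carry b r K m\<close> is Bernoulli with mean
  \<open>tail_frac b r K\<close>; \<open>carries_var\<close> is the variance of \<open>carries b r K m\<close> and \<open>carry_cov\<close>
  its covariance with the top carry.\<close>
definition tail_frac :: "nat \<Rightarrow> nat \<Rightarrow> nat \<Rightarrow> real" where
  "tail_frac b r K = real (r mod b ^ K) / real b ^ K"

definition carry_var :: "nat \<Rightarrow> nat \<Rightarrow> nat \<Rightarrow> real" where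
  "carry_var b r K = tail_frac b r K * (1 - tail_frac b r K)"

definition carries_mean :: "nat \<Rightarrow> nat \<Rightarrow> nat \<Rightarrow> real" where
  "carries_mean b r K = real (carries_sum b r K) / real b ^ K"

definition carries_var :: "nat \<Rightarrow> nat \<Rightarrow> nat \<Rightarrow> real" where
  "carries_var b r K = real (carries_sq_sum b r K) / real b ^ K - (carries_mean b r K)\<^sup>2"

definition carry_cov :: "nat \<Rightarrow> nat \<Rightarrow> nat \<Rightarrow> real" where
  "carry_cov b r K = real (carry_carries_sum b r K) / real b ^ K - carries_mean b r K * tail_frac b r K"

lemma tail_frac_0 [simp]: "tail_frac b r 0 = 0"
  by (simp add: tail_frac_def)

lemma carries_var_0 [simp]: "carries_var b r 0 = 0"
  by (simp add: carries_var_def carries_mean_def carries_sq_sum_def carries_sum_def)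

lemma carry_cov_0 [simp]: "carry_cov b r 0 = 0"
  by (simp add: carry_cov_def carries_mean_def carry_carries_sum_def carries_sum_def)

context digit_base
begin

lemma tail_frac_bounds: "0 \<le> tail_frac b r K" "tail_frac b r K < 1"
  using base_power_pos[of K] by (simp_all add: tail_frac_def flip: of_nat_power)

lemma tail_frac_Suc: "tail_frac b r (Suc K) = (real (digit b r K) + tail_frac b r K) / real b"
proof -
  have "r mod b ^ Suc K = b ^ K * digit b r K + r mod b ^ K"
    unfolding digit_def power_Suc2 by (rule mod_mult2_eq)
  then show ?thesis
    using base_pos unfolding tail_frac_def by (simp add: field_simps)
qed

lemma carry_var_nonneg: "0 \<le> carry_var b r K"
  using tail_frac_bounds[of r K] unfolding carry_var_def by simp

text \<open>The carries up to position \<open>K + 1\<close> are those up to \<open>K\<close> plus the new top carry; the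
  covariance with the new top carry is damped by the factor \<open>1 / b\<close>.\<close>
lemma carries_var_Suc:
  "carries_var b r (Suc K) = carries_var b r K + carry_var b r (Suc K) + 2 * carry_cov b r K / real b"
  and carry_cov_Suc: "carry_cov b r (Suc K) = carry_var b r (Suc K) + carry_cov b r K / real b"
proof -
  define B where "B = real b ^ K"
  define a where "a = real (digit b r K)"
  have B: "0 < B" and b: "0 < real b"
    unfolding B_def using base_pos by simp_all
  have t: "real (r mod b ^ K) = B * tail_frac b r K"
    using B unfolding tail_frac_def B_def by simp
  have tS: "tail_frac b r (Suc K) = (a + tail_frac b r K) / real b"
    unfolding tail_frac_Suc a_def ..
  have bS: "real b ^ Suc K = real b * B"
    unfolding B_def by simp
  note sums = carries_sums_Suc[of r K, unfolded a_def[symmetric]]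
  show "carries_var b r (Suc K) = carries_var b r K + carry_var b r (Suc K) + 2 * carry_cov b r K / real b"
    unfolding carries_var_def carry_var_def carry_cov_def carries_mean_def bS sums tS
    using B b by (simp add: t a_def B_def[symmetric] field_simps power2_eq_square)
  show "carry_cov b r (Suc K) = carry_var b r (Suc K) + carry_cov b r K / real b"
    unfolding carry_var_def carry_cov_def carries_mean_def bS sums tS
    using B b by (simp add: t a_def B_def[symmetric] field_simps power2_eq_square)
qed

lemma carry_cov_nonneg: "0 \<le> carry_cov b r K"
  by (induction K) (simp_all add: carry_cov_Suc carry_var_nonneg)

lemma carries_var_le_Suc: "carries_var b r K \<le> carries_var b r (Suc K)"
  using carry_var_nonneg[of r "Suc K"] carry_cov_nonneg[of r K] base_pos
  unfolding carries_var_Suc by simp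

lemma carries_var_carry_cov_telescope:
  "(real b - 1) * carries_var b r K + 2 * carry_cov b r K = (real b + 1) * (\<Sum>j<K. carry_var b r (Suc j))"
proof (induction K)
  case (Suc K)
  have "(real b - 1) * carries_var b r (Suc K) + 2 * carry_cov b r (Suc K)
      = ((real b - 1) * carries_var b r K + 2 * carry_cov b r K) + (real b + 1) * carry_var b r (Suc K)"
    unfolding carries_var_Suc carry_cov_Suc using base_pos by (simp add: field_simps)
  then show ?case
    using Suc by (simp add: field_simps)
qed simp

end

section \<open>The upper bound\<close>

lemma quad_plus_scaled_min_le:
  fixes B x :: real
  assumes "2 \<le> B" "0 \<le> x" "x \<le> 1"
  shows "x * (1 - x) + B / (B - 1) * min x (1 - x) \<le> 1/4 + B / (2 * (B - 1))"
proof -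
  define u where "u = min x (1 - x)"
  have u: "0 \<le> u" "u \<le> 1/2"
    using assms unfolding u_def min_def by auto
  have "x * (1 - x) = u * (1 - u)"
    unfolding u_def by (cases "x \<le> 1 - x") (simp_all add: min_def algebra_simps)
  moreover have "u * (1 - u) \<le> 1/4"
    using zero_le_power2[of "u - 1/2"] by (simp add: power2_eq_square algebra_simps)
  moreover have "B / (B - 1) * u \<le> B / (2 * (B - 1))"
  proof -
    have "B / (B - 1) * u \<le> B / (B - 1) * (1/2)"
      using u assms by (intro mult_left_mono) auto
    then show ?thesis
      by (simp add: mult.commute)
  qed
  ultimately show ?thesis
    unfolding u_def[symmetric] by linarith
qed

lemma quad_plus_scaled_min_div_le:
  fixes B p :: real
  assumes B: "2 \<le> B" and p: "0 \<le> p" "p \<le> 1"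
  shows "p / B / B * (1 - p / B / B) + B / (B - 1) * min (p / B / B) (1 - p / B / B)
    \<le> B / (B - 1) * min (p / B) (1 - p / B)"
proof -
  define t where "t = p / B"
  have "0 \<le> t" "t \<le> 1/2"
    using B p unfolding t_def by (auto simp: field_simps)
  then have t: "0 \<le> t" "t \<le> 1/2" "t / B \<le> 1/2" "0 \<le> t / B"
    using B by (auto simp: field_simps)
  have "t / B * (1 - t / B) \<le> t / B"
    using t by (intro mult_left_le) auto
  moreover have "t / B + B / (B - 1) * (t / B) = t * (1 / B + 1 / (B - 1))"
    using B by (simp add: field_simps)
  moreover have "B / (B - 1) = 1 + 1 / (B - 1)"
    using B by (simp add: field_simps)
  then have "1 / B + 1 / (B - 1) \<le> B / (B - 1)"
    using B by simp
  then have "t * (1 / B + 1 / (B - 1)) \<le> t * (B / (B - 1))"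
    using t by (intro mult_left_mono) auto
  ultimately show ?thesis
    using t unfolding t_def[symmetric] by (simp add: min_def mult.commute)
qed

definition block_start :: "nat \<Rightarrow> nat \<Rightarrow> nat \<Rightarrow> bool" where
  "block_start b r k \<longleftrightarrow>
    k = 0 \<or> (digit b r k \<noteq> 0 \<and> digit b r k \<noteq> b - 1) \<or> digit b r k \<noteq> digit b r (k - 1)"

lemma rho_eq_card_block_start: "rho b r = card {k. k < ndigits b r \<and> block_start b r k}"
  unfolding rho_def block_start_def ..

text \<open>Position \<open>ndigits b r\<close> is where the infinite block of leading zeros of \<open>r\<close> starts.\<close>
definition extended_block_starts :: "nat \<Rightarrow> nat \<Rightarrow> nat set" where
  "extended_block_starts b r = {k. k < ndigits b r \<and> block_start b r k} \<union> {ndigits b r}"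

definition carry_potential :: "nat \<Rightarrow> nat \<Rightarrow> nat \<Rightarrow> real" where
  "carry_potential b r j = real b / (real b - 1) * min (tail_frac b r j) (1 - tail_frac b r j)"

lemma carry_potential_0 [simp]: "carry_potential b r 0 = 0"
  by (simp add: carry_potential_def)

lemma finite_extended_block_starts: "finite (extended_block_starts b r)"
  unfolding extended_block_starts_def by simp

lemma card_extended_block_starts_le: "card (extended_block_starts b r) \<le> rho b r + 1"
  unfolding extended_block_starts_def rho_eq_card_block_start
  using card_Un_le[of "{k. k < ndigits b r \<and> block_start b r k}" "{ndigits b r}"] by simp

context digit_base
begin

lemma carry_potential_nonneg: "0 \<le> carry_potential b r j"
  using tail_frac_bounds[of r j] base_ge_2 unfolding carry_potential_def by simp

lemma carry_var_potential_step_zeros: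
  assumes "digit b r (Suc i) = 0" "digit b r i = 0"
  shows "carry_var b r (Suc (Suc i)) + carry_potential b r (Suc (Suc i)) \<le> carry_potential b r (Suc i)"
proof -
  define B where "B = real b"
  have B: "2 \<le> B"
    unfolding B_def using base_ge_2 by simp
  have "tail_frac b r (Suc i) = tail_frac b r i / B" "tail_frac b r (Suc (Suc i)) = tail_frac b r i / B / B"
    using assms unfolding B_def by (simp_all add: tail_frac_Suc)
  then show ?thesis
    unfolding carry_var_def carry_potential_def B_def[symmetric]
    using quad_plus_scaled_min_div_le[OF B, of "tail_frac b r i"] tail_frac_bounds[of r i] by simp
qed

lemma carry_var_potential_step_tops:
  assumes "digit b r (Suc i) = b - 1" "digit b r i = b - 1"
  shows "carry_var b r (Suc (Suc i)) + carry_potential b r (Suc (Suc i)) \<le> carry_potential b r (Suc i)"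
proof -
  define B where "B = real b"
  define p where "p = 1 - tail_frac b r i"
  have B: "2 \<le> B"
    unfolding B_def using base_ge_2 by simp
  have p: "0 \<le> p" "p \<le> 1"
    using tail_frac_bounds[of r i] unfolding p_def by simp_all
  have d: "real (digit b r k) = B - 1" if "digit b r k = b - 1" for k
    using that base_ge_2 unfolding B_def by simp
  have tj: "tail_frac b r (Suc i) = 1 - p / B"
    unfolding tail_frac_Suc[of r i] d[OF assms(2)] B_def[symmetric] p_def using B by (simp add: field_simps)
  have tS: "tail_frac b r (Suc (Suc i)) = 1 - p / B / B"
    unfolding tail_frac_Suc[of r "Suc i"] d[OF assms(1)] tj B_def[symmetric] using B by (simp add: field_simps)
  have "carry_var b r (Suc (Suc i)) = p / B / B * (1 - p / B / B)"
    unfolding carry_var_def tS by (simp add: algebra_simps)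
  moreover have "carry_potential b r (Suc (Suc i)) = B / (B - 1) * min (p / B / B) (1 - p / B / B)"
    unfolding carry_potential_def tS B_def[symmetric] by (simp add: min.commute)
  moreover have "carry_potential b r (Suc i) = B / (B - 1) * min (p / B) (1 - p / B)"
    unfolding carry_potential_def tj B_def[symmetric] by (simp add: min.commute)
  ultimately show ?thesis
    using quad_plus_scaled_min_div_le[OF B p] by simp
qed

end

context digit_shift
begin

lemma rho_pos: "1 \<le> rho b r"
proof -
  have "0 \<in> {k. k < ndigits b r \<and> block_start b r k}"
    using ndigits_pos unfolding block_start_def by simp
  then show ?thesis
    unfolding rho_eq_card_block_start by (simp add: Suc_le_eq card_gt_0_iff) blast
qed

lemma digit_repeats_if_not_extended_block_start:
  assumes "j \<notin> extended_block_starts b r"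
  obtains i where "j = Suc i" "digit b r j = digit b r i" "digit b r j = 0 \<or> digit b r j = b - 1"
proof (cases "ndigits b r < j")
  case True
  then obtain i where "j = Suc i"
    by (cases j) auto
  with True show ?thesis
    using that digit_ge_ndigits by auto
next
  case False
  then have "j < ndigits b r" "\<not> block_start b r j"
    using assms unfolding extended_block_starts_def by auto
  then show ?thesis
    using that unfolding block_start_def by (cases j) auto
qed

lemma carry_var_potential_step:
  "carry_var b r (Suc j) + carry_potential b r (Suc j)
    \<le> carry_potential b r j + (if j \<in> extended_block_starts b r then 1/4 + real b / (2 * (real b - 1)) else 0)"
proof (cases "j \<in> extended_block_starts b r")
  case True
  have "carry_var b r (Suc j) + carry_potential b r (Suc j) \<le> 1/4 + real b / (2 * (real b - 1))"
    unfolding carry_var_def carry_potential_def using base_ge_2 tail_frac_bounds[of r "Suc j"]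
    by (intro quad_plus_scaled_min_le) auto
  then show ?thesis
    using True carry_potential_nonneg[of r j] by simp
next
  case False
  then obtain i where i: "j = Suc i" "digit b r j = digit b r i" "digit b r j = 0 \<or> digit b r j = b - 1"
    by (rule digit_repeats_if_not_extended_block_start)
  then have "carry_var b r (Suc j) + carry_potential b r (Suc j) \<le> carry_potential b r j"
    using carry_var_potential_step_zeros[of r i] carry_var_potential_step_tops[of r i] by auto
  then show ?thesis
    using False by simp
qed

lemma sum_carry_var_le:
  "(\<Sum>j<K. carry_var b r (Suc j)) \<le> (1/4 + real b / (2 * (real b - 1))) * (real (rho b r) + 1)"
proof -
  define c where "c = 1/4 + real b / (2 * (real b - 1))"
  have c: "0 \<le> c"
    unfolding c_def using base_ge_2 by simp
  have "(\<Sum>j<K. carry_var b r (Suc j)) + carry_potential b r K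
      \<le> (\<Sum>j<K. if j \<in> extended_block_starts b r then c else 0)"
  proof (induction K)
    case (Suc K)
    then show ?case
      using carry_var_potential_step[of K] unfolding c_def[symmetric]
      by (cases "K \<in> extended_block_starts b r") simp_all
  qed simp
  also have "\<dots> = c * real (card ({..<K} \<inter> extended_block_starts b r))"
    by (simp add: sum.If_cases)
  also have "\<dots> \<le> c * (real (rho b r) + 1)"
    using card_mono[OF finite_extended_block_starts[of b r], of "{..<K} \<inter> extended_block_starts b r"]
      card_extended_block_starts_le[of b r] c
    by (intro mult_left_mono) auto
  finally show ?thesis
    using carry_potential_nonneg[of r K] unfolding c_def by linarith
qed

lemma carries_var_upper: "(real b - 1)\<^sup>2 * carries_var b r K \<le> 2 * real b ^ 2 * real (rho b r)"
proof -
  define B where "B = real b"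
  define S where "S = (\<Sum>j<K. carry_var b r (Suc j))"
  have B: "2 \<le> B"
    unfolding B_def using base_ge_2 by simp
  have "(B - 1) * carries_var b r K \<le> (B + 1) * S"
    using carries_var_carry_cov_telescope[of r K] carry_cov_nonneg[of r K] unfolding S_def B_def by linarith
  then have "(B - 1) * ((B - 1) * carries_var b r K) \<le> (B - 1) * ((B + 1) * S)"
    using B by (intro mult_left_mono) auto
  then have "(B - 1)\<^sup>2 * carries_var b r K \<le> (B\<^sup>2 - 1) * S"
    by (simp add: power2_eq_square algebra_simps)
  also have "\<dots> \<le> (B\<^sup>2 - 1) * ((1/4 + B / (2 * (B - 1))) * (real (rho b r) + 1))"
    using sum_carry_var_le[of K] one_le_power[of B 2] B unfolding S_def B_def by (intro mult_left_mono) auto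
  also have "\<dots> = ((B\<^sup>2 - 1) / 4 + B * (B + 1) / 2) * (real (rho b r) + 1)"
    using B by (simp add: field_simps power2_eq_square)
  also have "\<dots> \<le> B\<^sup>2 * (2 * real (rho b r))"
    using zero_le_power2[of "B - 1"] rho_pos B
    by (intro mult_mono) (auto simp: power2_eq_square field_simps)
  finally show ?thesis
    unfolding B_def by simp
qed

end

section \<open>The lower bound\<close>

lemma quad_div_ge:
  fixes B u :: real
  assumes B: "2 \<le> B" and u: "1 / B \<le> u" "u \<le> 1"
  shows "(B\<^sup>2 - 1) / B ^ 4 \<le> u / B * (1 - u / B)"
proof -
  define v where "v = u / B"
  have v: "1 / B\<^sup>2 \<le> v" "v \<le> 1 / B"
    using u B unfolding v_def by (simp_all add: field_simps power2_eq_square)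
  have "2 * 2 \<le> B * B"
    using B by (intro mult_mono) auto
  then have "1 / B \<le> 1/2" "1 / B\<^sup>2 \<le> 1/4"
    using B by (simp_all add: field_simps power2_eq_square)
  then have "1 / B + 1 / B\<^sup>2 \<le> 1"
    by simp
  then have "0 \<le> (v - 1 / B\<^sup>2) * (1 - 1 / B\<^sup>2 - v)"
    using v by (intro mult_nonneg_nonneg) auto
  then have "1 / B\<^sup>2 * (1 - 1 / B\<^sup>2) \<le> v * (1 - v)"
    by (simp add: algebra_simps)
  moreover have "1 / B\<^sup>2 * (1 - 1 / B\<^sup>2) = (B\<^sup>2 - 1) / B ^ 4"
    using B by (simp add: field_simps power2_eq_square power4_eq_xxxx)
  ultimately show ?thesis
    unfolding v_def by simp
qed

lemma quad_add_quad_div_ge: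
  fixes B u :: real
  assumes B: "2 \<le> B" and u: "1 / B \<le> u" "u \<le> 1"
  shows "(B - 1) / B\<^sup>2 \<le> u * (1 - u) + u / B * (1 - u / B)"
proof -
  have "(B - 1) / B\<^sup>2 \<le> 1 / B"
    using B by (simp add: field_simps power2_eq_square)
  also have "\<dots> \<le> u"
    by (rule u(1))
  also have "\<dots> \<le> (1 + 1 / B\<^sup>2) * u"
    using u B order_trans[OF _ u(1), of 0] by (simp add: algebra_simps)
  finally have "(B - 1) / B\<^sup>2 \<le> (1 + 1 / B\<^sup>2) * u" .
  then have "0 \<le> (1 - u) * ((1 + 1 / B\<^sup>2) * u - (B - 1) / B\<^sup>2)"
    using u by (intro mult_nonneg_nonneg) auto
  moreover have "u * (1 - u) + u / B * (1 - u / B) - (B - 1) / B\<^sup>2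
      = (1 - u) * ((1 + 1 / B\<^sup>2) * u - (B - 1) / B\<^sup>2)"
    using B by (simp add: field_simps power2_eq_square)
  ultimately show ?thesis
    by linarith
qed

lemma quad_ge_if_between:
  fixes B x :: real
  assumes B: "2 \<le> B" and x: "1 / B \<le> x" "x \<le> 1 - 1 / B"
  shows "(B - 1) / B\<^sup>2 \<le> x * (1 - x)"
proof -
  have "0 \<le> (x - 1 / B) * (1 - 1 / B - x)"
    using x by (intro mult_nonneg_nonneg) auto
  then have "1 / B * (1 - 1 / B) \<le> x * (1 - x)"
    by (simp add: algebra_simps)
  moreover have "1 / B * (1 - 1 / B) = (B - 1) / B\<^sup>2"
    using B by (simp add: field_simps power2_eq_square)
  ultimately show ?thesis
    by simp
qed

lemma quarter_plus_le_of_ge_3: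
  fixes B :: real
  assumes B: "3 \<le> B"
  shows "B / 4 + 1 / (4 * B\<^sup>2) \<le> (B\<^sup>2 - 1) * (B - 1) / (2 * B\<^sup>2)"
proof -
  have "B\<^sup>2 * 1 \<le> B\<^sup>2 * (B - 2)"
    using B by (intro mult_left_mono) auto
  then have "0 \<le> B ^ 3 - 2 * B\<^sup>2 - 2 * B + 1"
    using zero_le_power2[of "B - 1"] by (simp add: power2_eq_square power3_eq_cube algebra_simps)
  moreover have "(B\<^sup>2 - 1) * (B - 1) / (2 * B\<^sup>2) - (B / 4 + 1 / (4 * B\<^sup>2))
      = (B ^ 3 - 2 * B\<^sup>2 - 2 * B + 1) / (4 * B\<^sup>2)"
    using B by (simp add: field_simps power2_eq_square power3_eq_cube)
  moreover have "0 < 4 * B\<^sup>2"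
    using B by simp
  ultimately show ?thesis
    by (metis diff_ge_0_iff_ge divide_nonneg_pos)
qed

lemma variance_lower_arith:
  fixes B R S g :: real
  assumes B: "B = 2 \<or> 3 \<le> B" and R: "1 \<le> R"
    and SA: "R * ((B\<^sup>2 - 1) / B ^ 4) \<le> S" and SB: "R * ((B - 1) / B\<^sup>2) \<le> 2 * S"
    and g: "0 \<le> g" "g \<le> 1 / (32 * B ^ 3)"
  shows "B / 4 * R \<le> (B\<^sup>2 - 1) * S - 2 * (B - 1) * g"
  using B
proof
  assume B2: "B = 2"
  show ?thesis
    using SA g R unfolding B2 by simp
next
  assume B3: "3 \<le> B"
  have "(B\<^sup>2 - 1) * (R * ((B - 1) / B\<^sup>2)) \<le> (B\<^sup>2 - 1) * (2 * S)"
    using SB B3 one_le_power[of B 2] by (intro mult_left_mono) auto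
  then have "R * ((B\<^sup>2 - 1) * (B - 1) / (2 * B\<^sup>2)) \<le> (B\<^sup>2 - 1) * S"
    by (simp add: field_simps)
  moreover have "R * (B / 4 + 1 / (4 * B\<^sup>2)) \<le> R * ((B\<^sup>2 - 1) * (B - 1) / (2 * B\<^sup>2))"
    using quarter_plus_le_of_ge_3[OF B3] R by (intro mult_left_mono) auto
  moreover have "1 / (4 * B\<^sup>2) \<le> R * (1 / (4 * B\<^sup>2))"
    using mult_right_mono[OF R, of "1 / (4 * B\<^sup>2)"] by simp
  moreover have "2 * (B - 1) * g \<le> 2 * B * (1 / (32 * B ^ 3))"
    using g B3 by (intro mult_mono) auto
  moreover have "2 * B * (1 / (32 * B ^ 3)) \<le> 1 / (4 * B\<^sup>2)"
    using B3 by (simp add: field_simps power2_eq_square power3_eq_cube)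
  ultimately show ?thesis
    by (simp add: algebra_simps)
qed

lemma quad_lower_le:
  fixes B :: real
  assumes B: "2 \<le> B"
  shows "(B\<^sup>2 - 1) / B ^ 4 \<le> (B - 1) / B\<^sup>2"
proof -
  have "2 * B \<le> B * B"
    using B by (intro mult_right_mono) auto
  then have "B + 1 \<le> B * B"
    using B by linarith
  then have "(B - 1) * (B + 1) \<le> (B - 1) * (B * B)"
    using B by (intro mult_left_mono) auto
  then have "(B\<^sup>2 - 1) / B ^ 4 \<le> (B - 1) * B\<^sup>2 / B ^ 4"
    using B by (intro divide_right_mono) (auto simp: power2_eq_square algebra_simps)
  also have "\<dots> = (B - 1) / B\<^sup>2"
    using B by (simp add: field_simps power2_eq_square power4_eq_xxxx)
  finally show ?thesis .
qed

context digit_base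
begin

lemma carry_var_Suc_ge_of_middle_digit:
  assumes "digit b r j \<noteq> 0" "digit b r j \<noteq> b - 1"
  shows "(real b - 1) / real b ^ 2 \<le> carry_var b r (Suc j)"
proof -
  define B where "B = real b"
  have B: "2 \<le> B"
    unfolding B_def using base_ge_2 by simp
  note x = tail_frac_bounds[of r j]
  have d: "1 \<le> real (digit b r j)" "real (digit b r j) \<le> B - 2"
    using assms digit_le[of r j] unfolding B_def by auto
  then have "(real (digit b r j) + tail_frac b r j) / B \<le> (B - 1) / B"
    using x B by (intro divide_right_mono) auto
  then have "1 / B \<le> tail_frac b r (Suc j)" "tail_frac b r (Suc j) \<le> 1 - 1 / B"
    using d x B unfolding tail_frac_Suc B_def[symmetric] by (simp_all add: field_simps)
  then show ?thesis
    unfolding carry_var_def B_def[symmetric] by (rule quad_ge_if_between[OF B])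
qed

lemma carry_var_ge_of_zero_after_nonzero:
  assumes "digit b r (Suc i) = 0" "digit b r i \<noteq> 0"
  shows "(real b ^ 2 - 1) / real b ^ 4 \<le> carry_var b r (Suc (Suc i))"
    and "(real b - 1) / real b ^ 2 \<le> carry_var b r (Suc i) + carry_var b r (Suc (Suc i))"
proof -
  define B where "B = real b"
  define u where "u = tail_frac b r (Suc i)"
  have B: "2 \<le> B"
    unfolding B_def using base_ge_2 by simp
  have u: "1 / B \<le> u" "u \<le> 1"
    using assms(2) tail_frac_bounds[of r i] tail_frac_bounds[of r "Suc i"] B
    unfolding u_def tail_frac_Suc B_def[symmetric] by (simp_all add: field_simps)
  have "tail_frac b r (Suc (Suc i)) = u / B"
    using assms(1) unfolding tail_frac_Suc[of r "Suc i"] u_def B_def by simp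
  then show "(real b ^ 2 - 1) / real b ^ 4 \<le> carry_var b r (Suc (Suc i))"
    and "(real b - 1) / real b ^ 2 \<le> carry_var b r (Suc i) + carry_var b r (Suc (Suc i))"
    using quad_div_ge[OF B u] quad_add_quad_div_ge[OF B u]
    unfolding carry_var_def u_def[symmetric] B_def[symmetric] by simp_all
qed

lemma carry_var_ge_of_top_after_non_top:
  assumes "digit b r (Suc i) = b - 1" "digit b r i \<noteq> b - 1"
  shows "(real b ^ 2 - 1) / real b ^ 4 \<le> carry_var b r (Suc (Suc i))"
    and "(real b - 1) / real b ^ 2 \<le> carry_var b r (Suc i) + carry_var b r (Suc (Suc i))"
proof -
  define B where "B = real b"
  define u where "u = 1 - tail_frac b r (Suc i)"
  have B: "2 \<le> B"
    unfolding B_def using base_ge_2 by simp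
  have "real (digit b r i) \<le> B - 2"
    using assms(2) digit_le[of r i] unfolding B_def by auto
  then have u: "1 / B \<le> u" "u \<le> 1"
    using tail_frac_bounds[of r i] tail_frac_bounds[of r "Suc i"] B
    unfolding u_def tail_frac_Suc B_def[symmetric] by (simp_all add: field_simps)
  have tS: "tail_frac b r (Suc (Suc i)) = 1 - u / B"
    using assms(1) base_ge_2 B unfolding tail_frac_Suc[of r "Suc i"] u_def B_def by (simp add: field_simps)
  have "carry_var b r (Suc (Suc i)) = u / B * (1 - u / B)"
    unfolding carry_var_def tS by (simp add: algebra_simps)
  moreover have "carry_var b r (Suc i) = u * (1 - u)"
    unfolding carry_var_def u_def by (simp add: algebra_simps)
  ultimately show "(real b ^ 2 - 1) / real b ^ 4 \<le> carry_var b r (Suc (Suc i))"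
    and "(real b - 1) / real b ^ 2 \<le> carry_var b r (Suc i) + carry_var b r (Suc (Suc i))"
    using quad_div_ge[OF B u] quad_add_quad_div_ge[OF B u] unfolding B_def by simp_all
qed

end

context digit_shift
begin

lemma rho_le_card_extended_block_starts: "rho b r \<le> card (extended_block_starts b r - {0})"
proof -
  define A where "A = {k. k < ndigits b r \<and> block_start b r k}"
  have "0 \<in> A"
    unfolding A_def block_start_def using ndigits_pos by simp
  moreover have "finite A"
    unfolding A_def by simp
  ultimately have "card A = card (A - {0}) + 1"
    using card_Diff_singleton[of 0 A] card_gt_0_iff[of A] by auto
  also have "\<dots> = card (extended_block_starts b r - {0})"
  proof -
    have "extended_block_starts b r - {0} = insert (ndigits b r) (A - {0})"
      unfolding extended_block_starts_def A_def using ndigits_pos by auto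
    then show ?thesis
      unfolding A_def by simp
  qed
  finally show ?thesis
    unfolding rho_eq_card_block_start A_def by simp
qed

lemma carry_var_lower_at_block_start:
  assumes j: "j \<in> extended_block_starts b r" "j \<noteq> 0"
  shows "(real b ^ 2 - 1) / real b ^ 4 \<le> carry_var b r (Suc j)"
    and "(real b - 1) / real b ^ 2 \<le> carry_var b r j + carry_var b r (Suc j)"
proof -
  obtain i where i: "j = Suc i"
    using j(2) by (cases j) auto
  have start: "j = ndigits b r \<or> block_start b r j"
    using j(1) unfolding extended_block_starts_def by auto
  consider (mid) "digit b r j \<noteq> 0" "digit b r j \<noteq> b - 1" | (zero) "digit b r j = 0" | (top) "digit b r j = b - 1"
    by blast
  then have "(real b ^ 2 - 1) / real b ^ 4 \<le> carry_var b r (Suc j)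
      \<and> (real b - 1) / real b ^ 2 \<le> carry_var b r j + carry_var b r (Suc j)"
  proof cases
    case mid
    then show ?thesis
      using carry_var_Suc_ge_of_middle_digit[OF mid] quad_lower_le[of "real b"] base_ge_2
        carry_var_nonneg[of r j] by simp
  next
    case zero
    have "digit b r i \<noteq> 0"
    proof (cases "j = ndigits b r")
      case True
      then have "i = ndigits b r - 1"
        using i by simp
      then show ?thesis
        using digit_ndigits_minus_1_neq_0 by simp
    next
      case False
      then show ?thesis
        using start zero i unfolding block_start_def by auto
    qed
    then show ?thesis
      using carry_var_ge_of_zero_after_nonzero zero unfolding i by blast
  next
    case top
    have "j \<noteq> ndigits b r"
      using top digit_ge_ndigits[of "ndigits b r"] base_ge_2 by auto
    then have "digit b r i \<noteq> b - 1"
      using start top i unfolding block_start_def by auto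
    then show ?thesis
      using carry_var_ge_of_top_after_non_top top unfolding i by blast
  qed
  then show "(real b ^ 2 - 1) / real b ^ 4 \<le> carry_var b r (Suc j)"
    and "(real b - 1) / real b ^ 2 \<le> carry_var b r j + carry_var b r (Suc j)"
    by auto
qed

lemma sum_carry_var_lower:
  assumes K: "ndigits b r < K"
  shows "real (rho b r) * ((real b ^ 2 - 1) / real b ^ 4) \<le> (\<Sum>j<K. carry_var b r (Suc j))"
    and "real (rho b r) * ((real b - 1) / real b ^ 2) \<le> 2 * (\<Sum>j<K. carry_var b r (Suc j))"
proof -
  define G where "G = extended_block_starts b r - {0}"
  have GK: "G \<subseteq> {..<K}"
    using K unfolding G_def extended_block_starts_def by auto
  then have fin: "finite G"
    using finite_subset by blast
  have rho: "real (rho b r) \<le> real (card G)"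
    using rho_le_card_extended_block_starts unfolding G_def by simp
  have lower: "j \<in> extended_block_starts b r" "j \<noteq> 0" if "j \<in> G" for j
    using that unfolding G_def by auto
  have sum_Suc: "(\<Sum>j\<in>G. carry_var b r (Suc j)) \<le> (\<Sum>j<K. carry_var b r (Suc j))"
    using GK carry_var_nonneg by (intro sum_mono2) auto
  have "(\<Sum>j\<in>G. carry_var b r j) \<le> (\<Sum>j<K. carry_var b r j)"
    using GK carry_var_nonneg by (intro sum_mono2) auto
  also have "\<dots> \<le> (\<Sum>j<K. carry_var b r (Suc j))"
  proof -
    obtain n where n: "K = Suc n"
      using K by (cases K) auto
    have "(\<Sum>j<K. carry_var b r j) = carry_var b r 0 + (\<Sum>j<n. carry_var b r (Suc j))"
      unfolding n by (rule sum.lessThan_Suc_shift)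
    then show ?thesis
      unfolding n using carry_var_nonneg[of r "Suc n"] by (simp add: carry_var_def)
  qed
  finally have sum_0: "(\<Sum>j\<in>G. carry_var b r j) \<le> (\<Sum>j<K. carry_var b r (Suc j))" .
  have "real (rho b r) * ((real b ^ 2 - 1) / real b ^ 4) \<le> real (card G) * ((real b ^ 2 - 1) / real b ^ 4)"
    using rho one_le_power[of "real b" 2] base_ge_2 by (intro mult_right_mono) auto
  also have "\<dots> \<le> (\<Sum>j\<in>G. carry_var b r (Suc j))"
    using carry_var_lower_at_block_start(1)[OF lower] sum_mono[of G "\<lambda>_. (real b ^ 2 - 1) / real b ^ 4"]
    by simp
  finally show "real (rho b r) * ((real b ^ 2 - 1) / real b ^ 4) \<le> (\<Sum>j<K. carry_var b r (Suc j))"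
    using sum_Suc by linarith
  have "real (rho b r) * ((real b - 1) / real b ^ 2) \<le> real (card G) * ((real b - 1) / real b ^ 2)"
    using rho base_ge_2 by (intro mult_right_mono) auto
  also have "\<dots> \<le> (\<Sum>j\<in>G. carry_var b r j + carry_var b r (Suc j))"
    using carry_var_lower_at_block_start(2)[OF lower] sum_mono[of G "\<lambda>_. (real b - 1) / real b ^ 2"]
    by simp
  finally show "real (rho b r) * ((real b - 1) / real b ^ 2) \<le> 2 * (\<Sum>j<K. carry_var b r (Suc j))"
    using sum_Suc sum_0 by (simp add: sum.distrib)
qed

lemma carry_cov_tail_frac_contract:
  assumes "ndigits b r \<le> K"
  shows "carry_cov b r (Suc K) + 2 * tail_frac b r (Suc K) \<le> 3/4 * (carry_cov b r K + 2 * tail_frac b r K)"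
proof -
  have t: "tail_frac b r (Suc K) = tail_frac b r K / real b"
    using digit_ge_ndigits[OF assms] by (simp add: tail_frac_Suc)
  have "carry_var b r (Suc K) \<le> tail_frac b r (Suc K)"
    unfolding carry_var_def using tail_frac_bounds[of r "Suc K"] by (simp add: mult_left_le)
  then have "carry_cov b r (Suc K) + 2 * tail_frac b r (Suc K) \<le> (carry_cov b r K + 3 * tail_frac b r K) / real b"
    unfolding carry_cov_Suc t by (simp add: add_divide_distrib)
  also have "\<dots> \<le> (carry_cov b r K + 3 * tail_frac b r K) / 2"
    using base_ge_2 carry_cov_nonneg[of r K] tail_frac_bounds[of r K] by (intro divide_left_mono) auto
  also have "\<dots> \<le> 3/4 * (carry_cov b r K + 2 * tail_frac b r K)"
    using carry_cov_nonneg[of r K] by simp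
  finally show ?thesis .
qed

lemma carry_cov_tendsto_0: "carry_cov b r \<longlonglongrightarrow> 0"
proof -
  define L where "L = ndigits b r"
  define C where "C = carry_cov b r L + 2 * tail_frac b r L"
  have bound: "carry_cov b r (n + L) + 2 * tail_frac b r (n + L) \<le> (3/4) ^ n * C" for n
  proof (induction n)
    case (Suc n)
    have "carry_cov b r (Suc n + L) + 2 * tail_frac b r (Suc n + L)
        \<le> 3/4 * (carry_cov b r (n + L) + 2 * tail_frac b r (n + L))"
      using carry_cov_tail_frac_contract[of "n + L"] unfolding L_def by simp
    also have "\<dots> \<le> 3/4 * ((3/4) ^ n * C)"
      using Suc by simp
    finally show ?case
      by simp
  qed (simp add: C_def)
  have "(\<lambda>n. carry_cov b r (n + L)) \<longlonglongrightarrow> 0"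
  proof (rule tendsto_sandwich)
    show "\<forall>\<^sub>F n in sequentially. 0 \<le> carry_cov b r (n + L)"
      by (simp add: carry_cov_nonneg)
    have "carry_cov b r (n + L) \<le> (3/4) ^ n * C" for n
      using bound[of n] tail_frac_bounds(1)[of r "n + L"] by linarith
    then show "\<forall>\<^sub>F n in sequentially. carry_cov b r (n + L) \<le> (3/4) ^ n * C"
      by simp
    show "(\<lambda>n. (3/4::real) ^ n * C) \<longlonglongrightarrow> 0"
      by (intro tendsto_mult_left_zero LIMSEQ_power_zero) simp
  qed simp
  then show ?thesis
    by (rule LIMSEQ_offset)
qed

lemma carries_var_lower: "\<exists>K. real b / 4 * real (rho b r) \<le> (real b - 1)\<^sup>2 * carries_var b r K"
proof -
  define B where "B = real b"
  have B: "B = 2 \<or> 3 \<le> B"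
    unfolding B_def using base_ge_2 by (cases "b = 2") auto
  have "eventually (\<lambda>K. carry_cov b r K < 1 / (32 * B ^ 3) \<and> ndigits b r < K) sequentially"
    using base_ge_2 unfolding B_def
    by (intro eventually_conj order_tendstoD(2)[OF carry_cov_tendsto_0] eventually_gt_at_top) simp
  then obtain K where K: "carry_cov b r K < 1 / (32 * B ^ 3)" "ndigits b r < K"
    using eventually_happens by fastforce
  define S where "S = (\<Sum>j<K. carry_var b r (Suc j))"
  have "(B - 1) * carries_var b r K = (B + 1) * S - 2 * carry_cov b r K"
    using carries_var_carry_cov_telescope[of r K] unfolding B_def S_def by linarith
  then have "(B - 1)\<^sup>2 * carries_var b r K = (B - 1) * ((B + 1) * S - 2 * carry_cov b r K)"
    by (simp add: power2_eq_square mult.assoc)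
  also have "\<dots> = (B\<^sup>2 - 1) * S - 2 * (B - 1) * carry_cov b r K"
    by (simp add: power2_eq_square algebra_simps)
  finally have "(B - 1)\<^sup>2 * carries_var b r K = (B\<^sup>2 - 1) * S - 2 * (B - 1) * carry_cov b r K" .
  moreover have "B / 4 * real (rho b r) \<le> (B\<^sup>2 - 1) * S - 2 * (B - 1) * carry_cov b r K"
    using variance_lower_arith[OF B _ sum_carry_var_lower[OF K(2), folded B_def S_def] carry_cov_nonneg]
      K(1) rho_pos by simp
  ultimately have "B / 4 * real (rho b r) \<le> (B - 1)\<^sup>2 * carries_var b r K"
    by linarith
  then show ?thesis
    unfolding B_def by blast
qed

section \<open>The variance of \<open>mu\<close>\<close>

lemma real_Delta_eq_carries:
  assumes "ndigits b r \<le> n" "m < b ^ n"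
  shows "real_of_int (Delta b r m) = real (sdig b r) - (real b - 1) * real (carries b r n m)"
  using Delta_eq_carries[OF shift_less_power[OF assms(1)] assms(2)] base_ge_2 by simp

lemma average_Delta:
  assumes "ndigits b r \<le> n"
  shows "(\<Sum>m<b ^ n. real_of_int (Delta b r m)) / real b ^ n
    = real (sdig b r) - (real b - 1) * carries_mean b r n"
proof -
  have "(\<Sum>m<b ^ n. real_of_int (Delta b r m))
      = (\<Sum>m<b ^ n. real (sdig b r) - (real b - 1) * real (carries b r n m))"
    using real_Delta_eq_carries[OF assms] by simp
  also have "\<dots> = real b ^ n * real (sdig b r) - (real b - 1) * real (carries_sum b r n)"
    by (simp add: sum_subtractf sum_distrib_left[symmetric] carries_sum_def)
  finally show ?thesis
    unfolding carries_mean_def using base_power_pos[of n] by (simp add: field_simps)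
qed

lemma average_sq_Delta:
  assumes "ndigits b r \<le> n"
  shows "(\<Sum>m<b ^ n. (real_of_int (Delta b r m) - M)\<^sup>2) / real b ^ n
    = (real b - 1)\<^sup>2 * carries_var b r n + (real (sdig b r) - (real b - 1) * carries_mean b r n - M)\<^sup>2"
proof -
  define c where "c = real (sdig b r) - M"
  define a where "a = real b - 1"
  define P where "P = real b ^ n"
  have P: "0 < P"
    unfolding P_def using base_pos by simp
  have "(\<Sum>m<b ^ n. (real_of_int (Delta b r m) - M)\<^sup>2) = (\<Sum>m<b ^ n. (c - a * real (carries b r n m))\<^sup>2)"
    unfolding c_def a_def by (intro sum.cong refl) (simp add: real_Delta_eq_carries[OF assms] algebra_simps)
  also have "\<dots> = (\<Sum>m<b ^ n. c\<^sup>2 - 2 * c * a * real (carries b r n m) + a\<^sup>2 * (real (carries b r n m))\<^sup>2)"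
    by (intro sum.cong refl) (simp add: power2_eq_square algebra_simps)
  also have "\<dots> = P * c\<^sup>2 - 2 * c * a * real (carries_sum b r n) + a\<^sup>2 * real (carries_sq_sum b r n)"
    unfolding P_def carries_sum_def carries_sq_sum_def
    by (simp add: sum.distrib sum_subtractf sum_distrib_left[symmetric])
  also have "\<dots> / P = a\<^sup>2 * (real (carries_sq_sum b r n) / P - (real (carries_sum b r n) / P)\<^sup>2)
      + (c - a * (real (carries_sum b r n) / P))\<^sup>2"
    using P by (simp add: field_simps power2_eq_square)
  finally show ?thesis
    unfolding carries_var_def carries_mean_def P_def[symmetric] a_def[symmetric]
    by (simp add: c_def algebra_simps)
qed

lemma abs_delta_of_carries_le: "\<bar>real_of_int (delta_of_carries b r k)\<bar> \<le> (real (sdig b r) + real b) * (real k + 1)"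
proof -
  have "real_of_int (delta_of_carries b r k) = real (sdig b r) - (real b - 1) * real k"
    unfolding delta_of_carries_def using base_ge_2 by simp
  moreover have "0 \<le> (real b - 1) * real k"
    using base_ge_2 by (intro mult_nonneg_nonneg) auto
  moreover have "(real b - 1) * real k \<le> real b * (real k + 1)"
    by (simp add: algebra_simps)
  moreover have "real (sdig b r) \<le> real (sdig b r) * (real k + 1)"
    by (simp add: algebra_simps)
  moreover have "(real (sdig b r) + real b) * (real k + 1) = real (sdig b r) * (real k + 1) + real b * (real k + 1)"
    by (simp add: algebra_simps)
  ultimately show ?thesis
    unfolding abs_le_iff by (smt (verit) of_nat_0_le_iff mult_nonneg_nonneg)
qed

lemma average_Delta_tendsto_mean_mu:
  "(\<lambda>n. (\<Sum>m<b ^ n. real_of_int (Delta b r m)) / real b ^ n) \<longlonglongrightarrow> mean_mu b r"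
  unfolding mean_mu_def
proof (rule average_tendsto_moment)
  fix k
  have "\<bar>real_of_int (delta_of_carries b r k)\<bar> \<le> (real (sdig b r) + real b) * (real k + 1)"
    by (rule abs_delta_of_carries_le)
  also have "\<dots> \<le> (real (sdig b r) + real b) * (real k + 1)\<^sup>2"
    by (intro mult_left_mono) (auto simp: power2_eq_square)
  finally show "\<bar>real_of_int (delta_of_carries b r k)\<bar> \<le> (real (sdig b r) + real b) * (real k + 1)\<^sup>2" .
qed

text \<open>Both moments are limits of block averages, and the block variance is \<open>(b-1)^2\<close> times that
  of the carry count.\<close>
lemma carries_var_tendsto_var_mu: "(\<lambda>n. (real b - 1)\<^sup>2 * carries_var b r n) \<longlonglongrightarrow> var_mu b r"
proof -
  define \<mu> where "\<mu> = mean_mu b r"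
  define H where "H = (real (sdig b r) + real b + \<bar>\<mu>\<bar>)\<^sup>2"
  have "\<bar>(real_of_int (delta_of_carries b r k) - \<mu>)\<^sup>2\<bar> \<le> H * (real k + 1)\<^sup>2" for k
  proof -
    have "\<bar>\<mu>\<bar> \<le> \<bar>\<mu>\<bar> * (real k + 1)"
      by (simp add: algebra_simps)
    then have "\<bar>real_of_int (delta_of_carries b r k) - \<mu>\<bar> \<le> (real (sdig b r) + real b) * (real k + 1) + \<bar>\<mu>\<bar> * (real k + 1)"
      using abs_delta_of_carries_le[of k] abs_triangle_ineq4[of "real_of_int (delta_of_carries b r k)" \<mu>]
      by linarith
    then have "\<bar>real_of_int (delta_of_carries b r k) - \<mu>\<bar> \<le> (real (sdig b r) + real b + \<bar>\<mu>\<bar>) * (real k + 1)"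
      by (simp add: algebra_simps)
    then have "\<bar>real_of_int (delta_of_carries b r k) - \<mu>\<bar>\<^sup>2 \<le> ((real (sdig b r) + real b + \<bar>\<mu>\<bar>) * (real k + 1))\<^sup>2"
      by (intro power_mono) auto
    then show ?thesis
      unfolding H_def by (simp add: power_mult_distrib)
  qed
  then have sq: "(\<lambda>n. (\<Sum>m<b ^ n. (real_of_int (Delta b r m) - \<mu>)\<^sup>2) / real b ^ n) \<longlonglongrightarrow> var_mu b r"
    unfolding var_mu_def \<mu>_def by (rule average_tendsto_moment)
  have "(\<lambda>n. (\<Sum>m<b ^ n. (real_of_int (Delta b r m) - \<mu>)\<^sup>2) / real b ^ n
      - ((\<Sum>m<b ^ n. real_of_int (Delta b r m)) / real b ^ n - \<mu>)\<^sup>2) \<longlonglongrightarrow> var_mu b r - (\<mu> - \<mu>)\<^sup>2"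
    unfolding \<mu>_def by (intro tendsto_intros sq[unfolded \<mu>_def] average_Delta_tendsto_mean_mu)
  then have "(\<lambda>n. (\<Sum>m<b ^ n. (real_of_int (Delta b r m) - \<mu>)\<^sup>2) / real b ^ n
      - ((\<Sum>m<b ^ n. real_of_int (Delta b r m)) / real b ^ n - \<mu>)\<^sup>2) \<longlonglongrightarrow> var_mu b r"
    by simp
  then show ?thesis
  proof (rule Lim_transform_eventually)
    show "\<forall>\<^sub>F n in sequentially. (\<Sum>m<b ^ n. (real_of_int (Delta b r m) - \<mu>)\<^sup>2) / real b ^ n
        - ((\<Sum>m<b ^ n. real_of_int (Delta b r m)) / real b ^ n - \<mu>)\<^sup>2 = (real b - 1)\<^sup>2 * carries_var b r n"
      using eventually_ge_at_top[of "ndigits b r"]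
      by eventually_elim (simp add: average_Delta average_sq_Delta)
  qed
qed

end

theorem theorem1:
  fixes b r :: nat
  assumes "b \<ge> 2" and "r \<ge> 1"
  shows "real b / 4 * real (rho b r) \<le> var_mu b r
         \<and> var_mu b r \<le> 2 * real b ^ 2 * real (rho b r)"
proof -
  interpret digit_shift b r
    using assms by unfold_locales
  have mono: "incseq (\<lambda>n. (real b - 1)\<^sup>2 * carries_var b r n)"
    by (intro incseq_SucI mult_left_mono carries_var_le_Suc) simp
  obtain K where "real b / 4 * real (rho b r) \<le> (real b - 1)\<^sup>2 * carries_var b r K"
    using carries_var_lower by blast
  also have "\<dots> \<le> var_mu b r"
    by (rule incseq_le[OF mono carries_var_tendsto_var_mu])
  moreover have "var_mu b r \<le> 2 * real b ^ 2 * real (rho b r)"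
    by (rule LIMSEQ_le_const2[OF carries_var_tendsto_var_mu]) (use carries_var_upper in auto)
  ultimately show ?thesis
    by simp
qed

end
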